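(* Let $\mathbb{T}=(T,\eta,(\cdot)^\sharp)$ be a Kleene monad on a category $\mathbf{C}$. 1. If $\mathbf{C}$ is cartesian closed and $S$ is an object of $\mathbf{C}$, then the state monad transform $T_S X=(T(X\times S))^S$ is a Kleene monad, where the Kleisli category of $T_S$ is identified with the full subcategory of the Kleisli category of $\mathbb{T}$ on the objects of the form $X\times S$ (via $\mathbf{C}(X,(T(Y\times S))^S)\cong\mathbf{C}(X\times S,T(Y\times S))$), and joins, $\bot$ and Kleene star are inherited from the Kleisli category of $\mathbb{T}$. 2. Suppose $\mathbf{C}$ has finite products, $\mathbb{T}$ is strong with strength $\tau_{X,Y}:X\times TY\to T(X\times Y)$, and $(M,\varepsilon:1\to M,\bullet:M\times M\to M)$ is a monoid object in $\mathbf{C}$. Suppose the strength respects the Kleene monad structure, i.e. for all $f,g:Y\to TY'$ and $k:Y\to TY$ and every object $X$: $\tau\circ(\mathrm{id}_X\times\bot)=\bot$, $\tau\circ(\mathrm{id}_X\times(f\lor g))=\tau\circ(\mathrm{id}_X\times f)\lor\tau\circ(\mathrm{id}_X\times g)$, and $\tau\circ(\mathrm{id}_X\times k^\ast)=(\tau\circ(\mathrm{id}_X\times k))^\ast$ (stars and joins taken in the Kleisli category of $\mathbb{T}$). Then the writer monad transform $T_M X=T(M\times X)$ is a Kleene monad, where: for $f:X\to T(M\times Y)$ one sets $f^\circ:M\times X\to T(M\times Y)$ to be the composite $M\times X\xrightarrow{\tau\circ(\mathrm{id}\times f)}T(M\times(M\times Y))\cong T((M\times M)\times Y)\xrightarrow{T(\bullet\times\mathrm{id})}T(M\times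 Y)$; the unit of $T_M$ is $\eta\circ\langle\varepsilon\circ !,\mathrm{id}\rangle$; the Kleisli composite of $f:X\to T(M\times Y)$ followed by $g:Y\to T(M\times Z)$ is $(g^\circ)^\sharp\circ f$; joins and $\bot$ on $\mathbf{C}(X,T(M\times Y))$ are those of the Kleisli category of $\mathbb{T}$; and the Kleene star of $f:X\to T(M\times X)$ is $(f^\circ)^\ast\circ\eta\circ\langle\varepsilon\circ !,\mathrm{id}\rangle$ (star taken in the Kleisli category of $\mathbb{T}$).
   Context: Monads are given as Kleisli triples $(T,\eta,(\cdot)^\sharp)$ where $f:X\to TY$ is sent to $f^\sharp:TX\to TY$; the Kleisli category has morphisms $X\to TY$, identity $\eta$, and composition $g\cdot f=g^\sharp\circ f$. A Kleene-Kozen category is a category whose hom-sets are join-semilattices with least element $\bot$, with composition preserving binary joins and $\bot$ in each argument, together with an operator $(\cdot)^\ast:\mathbf{C}(X,X)\to\mathbf{C}(X,X)$ such that for all $f:Y\to Y$, $g:Y\to Z$, $h:X\to Y$: $g\circ f^\ast$ is the least prefixpoint of $x\mapsto g\lor x\circ f$ and $f^\ast\circ h$ is the least prefixpoint of $x\mapsto h\lor f\circ x$ (order: $f\le g\iff f\lor g=g$). A monad $\mathbb{T}$ is a Kleene monad if its Kleisli category is a Kleene-Kozen category. The terminal morphism is denoted $!$, pairing by $\langle\cdot,\cdot\rangle$. *)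

theory Defs
  imports Main
begin

section \<open>Categories with object-indexed operations\<close>

text \<open>A category is given by hom-sets indexed by pairs of objects, a composition
indexed by three objects, and identities. (Hom-sets of distinct pairs of objects
may share elements, since all operations are indexed by the objects.)\<close>

record ('o, 'a) cat =
  cHom :: "'o \<Rightarrow> 'o \<Rightarrow> 'a set"
  cCmp :: "'o \<Rightarrow> 'o \<Rightarrow> 'o \<Rightarrow> 'a \<Rightarrow> 'a \<Rightarrow> 'a"   (* cCmp X Y Z g f = g o f for f:X->Y, g:Y->Z *)
  cId  :: "'o \<Rightarrow> 'a"

definition is_category :: "('o, 'a, 'z) cat_scheme \<Rightarrow> bool" where
  "is_category C \<longleftrightarrow>
     (\<forall>X. cId C X \<in> cHom C X X) \<and>
     (\<forall>X Y Z f g. f \<in> cHom C X Y \<longrightarrow> g \<in> cHom C Y Z \<longrightarrow> cCmp C X Y Z g f \<in> cHom C X Z) \<and>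
     (\<forall>X Y f. f \<in> cHom C X Y \<longrightarrow> cCmp C X Y Y (cId C Y) f = f \<and> cCmp C X X Y f (cId C X) = f) \<and>
     (\<forall>W X Y Z f g h. f \<in> cHom C W X \<longrightarrow> g \<in> cHom C X Y \<longrightarrow> h \<in> cHom C Y Z \<longrightarrow>
        cCmp C W Y Z h (cCmp C W X Y g f) = cCmp C W X Z (cCmp C X Y Z h g) f)"

section \<open>Kleene-Kozen categories\<close>

record ('o, 'a) kk = "('o, 'a) cat" +
  kJoin :: "'o \<Rightarrow> 'o \<Rightarrow> 'a \<Rightarrow> 'a \<Rightarrow> 'a"
  kBot  :: "'o \<Rightarrow> 'o \<Rightarrow> 'a"
  kStar :: "'o \<Rightarrow> 'a \<Rightarrow> 'a"

definition kk_le :: "('o, 'a, 'z) kk_scheme \<Rightarrow> 'o \<Rightarrow> 'o \<Rightarrow> 'a \<Rightarrow> 'a \<Rightarrow> bool" where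
  "kk_le K X Y f g \<longleftrightarrow> kJoin K X Y f g = g"

definition least_prefixpoint ::
  "('o, 'a, 'z) kk_scheme \<Rightarrow> 'o \<Rightarrow> 'o \<Rightarrow> ('a \<Rightarrow> 'a) \<Rightarrow> 'a \<Rightarrow> bool" where
  "least_prefixpoint K X Y F p \<longleftrightarrow>
     p \<in> cHom K X Y \<and> kk_le K X Y (F p) p \<and>
     (\<forall>x \<in> cHom K X Y. kk_le K X Y (F x) x \<longrightarrow> kk_le K X Y p x)"

definition is_kk_category :: "('o, 'a, 'z) kk_scheme \<Rightarrow> bool" where
  "is_kk_category K \<longleftrightarrow>
     is_category K \<and>
     \<comment> \<open>hom-sets are join-semilattices with least element\<close>
     (\<forall>X Y f g. f \<in> cHom K X Y \<longrightarrow> g \<in> cHom K X Y \<longrightarrow> kJoin K X Y f g \<in> cHom K X Y) \<and>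
     (\<forall>X Y f g h. f \<in> cHom K X Y \<longrightarrow> g \<in> cHom K X Y \<longrightarrow> h \<in> cHom K X Y \<longrightarrow>
        kJoin K X Y (kJoin K X Y f g) h = kJoin K X Y f (kJoin K X Y g h)) \<and>
     (\<forall>X Y f g. f \<in> cHom K X Y \<longrightarrow> g \<in> cHom K X Y \<longrightarrow> kJoin K X Y f g = kJoin K X Y g f) \<and>
     (\<forall>X Y f. f \<in> cHom K X Y \<longrightarrow> kJoin K X Y f f = f) \<and>
     (\<forall>X Y. kBot K X Y \<in> cHom K X Y) \<and>
     (\<forall>X Y f. f \<in> cHom K X Y \<longrightarrow> kJoin K X Y (kBot K X Y) f = f) \<and>
     \<comment> \<open>composition preserves binary joins and bottom in each argument\<close>
     (\<forall>X Y Z f g h. f \<in> cHom K X Y \<longrightarrow> g \<in> cHom K Y Z \<longrightarrow> h \<in> cHom K Y Z \<longrightarrow>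
        cCmp K X Y Z (kJoin K Y Z g h) f = kJoin K X Z (cCmp K X Y Z g f) (cCmp K X Y Z h f)) \<and>
     (\<forall>X Y Z f. f \<in> cHom K X Y \<longrightarrow> cCmp K X Y Z (kBot K Y Z) f = kBot K X Z) \<and>
     (\<forall>X Y Z f h g. f \<in> cHom K X Y \<longrightarrow> h \<in> cHom K X Y \<longrightarrow> g \<in> cHom K Y Z \<longrightarrow>
        cCmp K X Y Z g (kJoin K X Y f h) = kJoin K X Z (cCmp K X Y Z g f) (cCmp K X Y Z g h)) \<and>
     (\<forall>X Y Z g. g \<in> cHom K Y Z \<longrightarrow> cCmp K X Y Z g (kBot K X Y) = kBot K X Z) \<and>
     \<comment> \<open>the star operator\<close>
     (\<forall>X f. f \<in> cHom K X X \<longrightarrow> kStar K X f \<in> cHom K X X) \<and>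
     (\<forall>Y Z f g. f \<in> cHom K Y Y \<longrightarrow> g \<in> cHom K Y Z \<longrightarrow>
        least_prefixpoint K Y Z (\<lambda>x. kJoin K Y Z g (cCmp K Y Y Z x f)) (cCmp K Y Y Z g (kStar K Y f))) \<and>
     (\<forall>X Y f h. f \<in> cHom K Y Y \<longrightarrow> h \<in> cHom K X Y \<longrightarrow>
        least_prefixpoint K X Y (\<lambda>x. kJoin K X Y h (cCmp K X Y Y f x)) (cCmp K X Y Y (kStar K Y f) h))"

section \<open>Kleisli triples and Kleene monads\<close>

definition is_kleisli_triple ::
  "('o, 'a) cat \<Rightarrow> ('o \<Rightarrow> 'o) \<Rightarrow> ('o \<Rightarrow> 'a) \<Rightarrow> ('o \<Rightarrow> 'o \<Rightarrow> 'a \<Rightarrow> 'a) \<Rightarrow> bool" where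
  "is_kleisli_triple C T eta ext \<longleftrightarrow>
     (\<forall>X. eta X \<in> cHom C X (T X)) \<and>
     (\<forall>X Y f. f \<in> cHom C X (T Y) \<longrightarrow> ext X Y f \<in> cHom C (T X) (T Y)) \<and>
     (\<forall>X. ext X X (eta X) = cId C (T X)) \<and>
     (\<forall>X Y f. f \<in> cHom C X (T Y) \<longrightarrow> cCmp C X (T X) (T Y) (ext X Y f) (eta X) = f) \<and>
     (\<forall>X Y Z f g. f \<in> cHom C X (T Y) \<longrightarrow> g \<in> cHom C Y (T Z) \<longrightarrow>
        ext X Z (cCmp C X (T Y) (T Z) (ext Y Z g) f)
          = cCmp C (T X) (T Y) (T Z) (ext Y Z g) (ext X Y f))"

definition kleisli_kk ::
  "('o, 'a) cat \<Rightarrow> ('o \<Rightarrow> 'o) \<Rightarrow> ('o \<Rightarrow> 'a) \<Rightarrow> ('o \<Rightarrow> 'o \<Rightarrow> 'a \<Rightarrow> 'a) \<Rightarrow>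
   ('o \<Rightarrow> 'o \<Rightarrow> 'a \<Rightarrow> 'a \<Rightarrow> 'a) \<Rightarrow> ('o \<Rightarrow> 'o \<Rightarrow> 'a) \<Rightarrow> ('o \<Rightarrow> 'a \<Rightarrow> 'a) \<Rightarrow> ('o, 'a) kk" where
  "kleisli_kk C T eta ext J B St =
     \<lparr> cHom = (\<lambda>X Y. cHom C X (T Y)),
       cCmp = (\<lambda>X Y Z g f. cCmp C X (T Y) (T Z) (ext Y Z g) f),
       cId = eta,
       kJoin = J, kBot = B, kStar = St \<rparr>"

definition kleene_monad ::
  "('o, 'a) cat \<Rightarrow> ('o \<Rightarrow> 'o) \<Rightarrow> ('o \<Rightarrow> 'a) \<Rightarrow> ('o \<Rightarrow> 'o \<Rightarrow> 'a \<Rightarrow> 'a) \<Rightarrow>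
   ('o \<Rightarrow> 'o \<Rightarrow> 'a \<Rightarrow> 'a \<Rightarrow> 'a) \<Rightarrow> ('o \<Rightarrow> 'o \<Rightarrow> 'a) \<Rightarrow> ('o \<Rightarrow> 'a \<Rightarrow> 'a) \<Rightarrow> bool" where
  "kleene_monad C T eta ext J B St \<longleftrightarrow>
     is_category C \<and> is_kleisli_triple C T eta ext \<and> is_kk_category (kleisli_kk C T eta ext J B St)"

definition Tmap ::
  "('o, 'a) cat \<Rightarrow> ('o \<Rightarrow> 'o) \<Rightarrow> ('o \<Rightarrow> 'a) \<Rightarrow> ('o \<Rightarrow> 'o \<Rightarrow> 'a \<Rightarrow> 'a) \<Rightarrow> 'o \<Rightarrow> 'o \<Rightarrow> 'a \<Rightarrow> 'a" where
  "Tmap C T eta ext X Y f = ext X Y (cCmp C X Y (T Y) (eta Y) f)"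

section \<open>Finite products and cartesian closure\<close>

record ('o, 'a) cart =
  pOne  :: 'o
  pTrm  :: "'o \<Rightarrow> 'a"
  pPrd  :: "'o \<Rightarrow> 'o \<Rightarrow> 'o"
  pPi1  :: "'o \<Rightarrow> 'o \<Rightarrow> 'a"
  pPi2  :: "'o \<Rightarrow> 'o \<Rightarrow> 'a"
  pPair :: "'o \<Rightarrow> 'o \<Rightarrow> 'o \<Rightarrow> 'a \<Rightarrow> 'a \<Rightarrow> 'a"

definition has_finite_products :: "('o, 'a) cat \<Rightarrow> ('o, 'a) cart \<Rightarrow> bool" where
  "has_finite_products C P \<longleftrightarrow>
     (\<forall>X. pTrm P X \<in> cHom C X (pOne P)) \<and>
     (\<forall>X f. f \<in> cHom C X (pOne P) \<longrightarrow> f = pTrm P X) \<and>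
     (\<forall>X Y. pPi1 P X Y \<in> cHom C (pPrd P X Y) X \<and> pPi2 P X Y \<in> cHom C (pPrd P X Y) Y) \<and>
     (\<forall>Z X Y f g. f \<in> cHom C Z X \<longrightarrow> g \<in> cHom C Z Y \<longrightarrow>
        pPair P Z X Y f g \<in> cHom C Z (pPrd P X Y) \<and>
        cCmp C Z (pPrd P X Y) X (pPi1 P X Y) (pPair P Z X Y f g) = f \<and>
        cCmp C Z (pPrd P X Y) Y (pPi2 P X Y) (pPair P Z X Y f g) = g) \<and>
     (\<forall>Z X Y h. h \<in> cHom C Z (pPrd P X Y) \<longrightarrow>
        pPair P Z X Y (cCmp C Z (pPrd P X Y) X (pPi1 P X Y) h)
                      (cCmp C Z (pPrd P X Y) Y (pPi2 P X Y) h) = h)"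

definition cross ::
  "('o, 'a) cat \<Rightarrow> ('o, 'a) cart \<Rightarrow> 'o \<Rightarrow> 'o \<Rightarrow> 'o \<Rightarrow> 'o \<Rightarrow> 'a \<Rightarrow> 'a \<Rightarrow> 'a" where
  "cross C P X Y X' Y' f g =
     pPair P (pPrd P X Y) X' Y'
       (cCmp C (pPrd P X Y) X X' f (pPi1 P X Y))
       (cCmp C (pPrd P X Y) Y Y' g (pPi2 P X Y))"

definition assoc_r :: "('o, 'a) cat \<Rightarrow> ('o, 'a) cart \<Rightarrow> 'o \<Rightarrow> 'o \<Rightarrow> 'o \<Rightarrow> 'a" where
  "assoc_r C P X Y Z =
     (let XY = pPrd P X Y; A = pPrd P XY Z in
      pPair P A X (pPrd P Y Z)
        (cCmp C A XY X (pPi1 P X Y) (pPi1 P XY Z))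
        (pPair P A Y Z (cCmp C A XY Y (pPi2 P X Y) (pPi1 P XY Z)) (pPi2 P XY Z)))"

definition assoc_l :: "('o, 'a) cat \<Rightarrow> ('o, 'a) cart \<Rightarrow> 'o \<Rightarrow> 'o \<Rightarrow> 'o \<Rightarrow> 'a" where
  "assoc_l C P X Y Z =
     (let YZ = pPrd P Y Z; A = pPrd P X YZ in
      pPair P A (pPrd P X Y) Z
        (pPair P A X Y (pPi1 P X YZ) (cCmp C A YZ Y (pPi1 P Y Z) (pPi2 P X YZ)))
        (cCmp C A YZ Z (pPi2 P Y Z) (pPi2 P X YZ)))"

record ('o, 'a) expo =
  eExp :: "'o \<Rightarrow> 'o \<Rightarrow> 'o"                  (* eExp S B = B^S *)
  eEv  :: "'o \<Rightarrow> 'o \<Rightarrow> 'a"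
  eCur :: "'o \<Rightarrow> 'o \<Rightarrow> 'o \<Rightarrow> 'a \<Rightarrow> 'a"

definition is_ccc :: "('o, 'a) cat \<Rightarrow> ('o, 'a) cart \<Rightarrow> ('o, 'a) expo \<Rightarrow> bool" where
  "is_ccc C P E \<longleftrightarrow>
     has_finite_products C P \<and>
     (\<forall>S B. eEv E S B \<in> cHom C (pPrd P (eExp E S B) S) B) \<and>
     (\<forall>A S B h. h \<in> cHom C (pPrd P A S) B \<longrightarrow>
        eCur E A S B h \<in> cHom C A (eExp E S B) \<and>
        cCmp C (pPrd P A S) (pPrd P (eExp E S B) S) B (eEv E S B)
          (cross C P A S (eExp E S B) S (eCur E A S B h) (cId C S)) = h) \<and>
     (\<forall>A S B k. k \<in> cHom C A (eExp E S B) \<longrightarrow>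
        eCur E A S B (cCmp C (pPrd P A S) (pPrd P (eExp E S B) S) B (eEv E S B)
          (cross C P A S (eExp E S B) S k (cId C S))) = k)"

definition uncur :: "('o, 'a) cat \<Rightarrow> ('o, 'a) cart \<Rightarrow> ('o, 'a) expo \<Rightarrow> 'o \<Rightarrow> 'o \<Rightarrow> 'o \<Rightarrow> 'a \<Rightarrow> 'a" where
  "uncur C P E A S B k =
     cCmp C (pPrd P A S) (pPrd P (eExp E S B) S) B (eEv E S B)
       (cross C P A S (eExp E S B) S k (cId C S))"

section \<open>State monad transform T_S X = (T(X x S))^S\<close>

definition stT :: "('o, 'a) cart \<Rightarrow> ('o, 'a) expo \<Rightarrow> ('o \<Rightarrow> 'o) \<Rightarrow> 'o \<Rightarrow> 'o \<Rightarrow> 'o" where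
  "stT P E T S X = eExp E S (T (pPrd P X S))"

definition stEta :: "('o, 'a) cart \<Rightarrow> ('o, 'a) expo \<Rightarrow> ('o \<Rightarrow> 'o) \<Rightarrow> ('o \<Rightarrow> 'a) \<Rightarrow> 'o \<Rightarrow> 'o \<Rightarrow> 'a" where
  "stEta P E T eta S X = eCur E X S (T (pPrd P X S)) (eta (pPrd P X S))"

definition stExt ::
  "('o, 'a) cat \<Rightarrow> ('o, 'a) cart \<Rightarrow> ('o, 'a) expo \<Rightarrow> ('o \<Rightarrow> 'o) \<Rightarrow> ('o \<Rightarrow> 'o \<Rightarrow> 'a \<Rightarrow> 'a) \<Rightarrow>
   'o \<Rightarrow> 'o \<Rightarrow> 'o \<Rightarrow> 'a \<Rightarrow> 'a" where
  "stExt C P E T ext S X Y f =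
     (let XS = pPrd P X S; YS = pPrd P Y S; TSX = stT P E T S X in
      eCur E TSX S (T YS)
        (cCmp C (pPrd P TSX S) (T XS) (T YS)
           (ext XS YS (uncur C P E X S (T YS) f))
           (eEv E S (T XS))))"

definition stJoin ::
  "('o, 'a) cat \<Rightarrow> ('o, 'a) cart \<Rightarrow> ('o, 'a) expo \<Rightarrow> ('o \<Rightarrow> 'o) \<Rightarrow> ('o \<Rightarrow> 'o \<Rightarrow> 'a \<Rightarrow> 'a \<Rightarrow> 'a) \<Rightarrow>
   'o \<Rightarrow> 'o \<Rightarrow> 'o \<Rightarrow> 'a \<Rightarrow> 'a \<Rightarrow> 'a" where
  "stJoin C P E T J S X Y f g =
     eCur E X S (T (pPrd P Y S))
       (J (pPrd P X S) (pPrd P Y S) (uncur C P E X S (T (pPrd P Y S)) f)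
                                    (uncur C P E X S (T (pPrd P Y S)) g))"

definition stBot ::
  "('o, 'a) cart \<Rightarrow> ('o, 'a) expo \<Rightarrow> ('o \<Rightarrow> 'o) \<Rightarrow> ('o \<Rightarrow> 'o \<Rightarrow> 'a) \<Rightarrow> 'o \<Rightarrow> 'o \<Rightarrow> 'o \<Rightarrow> 'a" where
  "stBot P E T B S X Y = eCur E X S (T (pPrd P Y S)) (B (pPrd P X S) (pPrd P Y S))"

definition stStar ::
  "('o, 'a) cat \<Rightarrow> ('o, 'a) cart \<Rightarrow> ('o, 'a) expo \<Rightarrow> ('o \<Rightarrow> 'o) \<Rightarrow> ('o \<Rightarrow> 'a \<Rightarrow> 'a) \<Rightarrow>
   'o \<Rightarrow> 'o \<Rightarrow> 'a \<Rightarrow> 'a" where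
  "stStar C P E T St S X f =
     eCur E X S (T (pPrd P X S)) (St (pPrd P X S) (uncur C P E X S (T (pPrd P X S)) f))"

section \<open>Strong monads and monoid objects\<close>

definition is_strength ::
  "('o, 'a) cat \<Rightarrow> ('o, 'a) cart \<Rightarrow> ('o \<Rightarrow> 'o) \<Rightarrow> ('o \<Rightarrow> 'a) \<Rightarrow> ('o \<Rightarrow> 'o \<Rightarrow> 'a \<Rightarrow> 'a) \<Rightarrow>
   ('o \<Rightarrow> 'o \<Rightarrow> 'a) \<Rightarrow> bool" where
  "is_strength C P T eta ext tau \<longleftrightarrow>
     (\<forall>X Y. tau X Y \<in> cHom C (pPrd P X (T Y)) (T (pPrd P X Y))) \<and>
     \<comment> \<open>naturality\<close>
     (\<forall>X Y X' Y' f g. f \<in> cHom C X X' \<longrightarrow> g \<in> cHom C Y Y' \<longrightarrow>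
        cCmp C (pPrd P X (T Y)) (T (pPrd P X Y)) (T (pPrd P X' Y'))
          (Tmap C T eta ext (pPrd P X Y) (pPrd P X' Y') (cross C P X Y X' Y' f g)) (tau X Y)
        = cCmp C (pPrd P X (T Y)) (pPrd P X' (T Y')) (T (pPrd P X' Y'))
          (tau X' Y') (cross C P X (T Y) X' (T Y') f (Tmap C T eta ext Y Y' g))) \<and>
     \<comment> \<open>unit: T(pi2) o tau_{1,Y} = pi2\<close>
     (\<forall>Y. cCmp C (pPrd P (pOne P) (T Y)) (T (pPrd P (pOne P) Y)) (T Y)
            (Tmap C T eta ext (pPrd P (pOne P) Y) Y (pPi2 P (pOne P) Y)) (tau (pOne P) Y)
          = pPi2 P (pOne P) (T Y)) \<and>
     \<comment> \<open>associativity: T(alpha) o tau_{X x Y, Z} = tau_{X, Y x Z} o (id x tau_{Y,Z}) o alpha\<close>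
     (\<forall>X Y Z.
        cCmp C (pPrd P (pPrd P X Y) (T Z)) (T (pPrd P (pPrd P X Y) Z)) (T (pPrd P X (pPrd P Y Z)))
          (Tmap C T eta ext (pPrd P (pPrd P X Y) Z) (pPrd P X (pPrd P Y Z)) (assoc_r C P X Y Z))
          (tau (pPrd P X Y) Z)
        = cCmp C (pPrd P (pPrd P X Y) (T Z)) (pPrd P X (T (pPrd P Y Z))) (T (pPrd P X (pPrd P Y Z)))
            (tau X (pPrd P Y Z))
            (cCmp C (pPrd P (pPrd P X Y) (T Z)) (pPrd P X (pPrd P Y (T Z))) (pPrd P X (T (pPrd P Y Z)))
               (cross C P X (pPrd P Y (T Z)) X (T (pPrd P Y Z)) (cId C X) (tau Y Z))
               (assoc_r C P X Y (T Z)))) \<and>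
     \<comment> \<open>compatibility with the unit\<close>
     (\<forall>X Y. cCmp C (pPrd P X Y) (pPrd P X (T Y)) (T (pPrd P X Y))
              (tau X Y) (cross C P X Y X (T Y) (cId C X) (eta Y))
            = eta (pPrd P X Y)) \<and>
     \<comment> \<open>compatibility with extension\<close>
     (\<forall>X Y Z f. f \<in> cHom C Y (T Z) \<longrightarrow>
        cCmp C (pPrd P X (T Y)) (pPrd P X (T Z)) (T (pPrd P X Z))
          (tau X Z) (cross C P X (T Y) X (T Z) (cId C X) (ext Y Z f))
        = cCmp C (pPrd P X (T Y)) (T (pPrd P X Y)) (T (pPrd P X Z))
            (ext (pPrd P X Y) (pPrd P X Z)
               (cCmp C (pPrd P X Y) (pPrd P X (T Z)) (T (pPrd P X Z))
                  (tau X Z) (cross C P X Y X (T Z) (cId C X) f)))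
            (tau X Y))"

definition is_monoid_object ::
  "('o, 'a) cat \<Rightarrow> ('o, 'a) cart \<Rightarrow> 'o \<Rightarrow> 'a \<Rightarrow> 'a \<Rightarrow> bool" where
  "is_monoid_object C P M e m \<longleftrightarrow>
     e \<in> cHom C (pOne P) M \<and> m \<in> cHom C (pPrd P M M) M \<and>
     cCmp C M (pPrd P M M) M m
       (pPair P M M M (cCmp C M (pOne P) M e (pTrm P M)) (cId C M)) = cId C M \<and>
     cCmp C M (pPrd P M M) M m
       (pPair P M M M (cId C M) (cCmp C M (pOne P) M e (pTrm P M))) = cId C M \<and>
     cCmp C (pPrd P (pPrd P M M) M) (pPrd P M M) M m
       (cross C P (pPrd P M M) M M M m (cId C M))
     = cCmp C (pPrd P (pPrd P M M) M) (pPrd P M M) M m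
         (cCmp C (pPrd P (pPrd P M M) M) (pPrd P M (pPrd P M M)) (pPrd P M M)
            (cross C P M (pPrd P M M) M M (cId C M) m) (assoc_r C P M M M))"

definition strength_respects_kleene ::
  "('o, 'a) cat \<Rightarrow> ('o, 'a) cart \<Rightarrow> ('o \<Rightarrow> 'o) \<Rightarrow> ('o \<Rightarrow> 'o \<Rightarrow> 'a) \<Rightarrow>
   ('o \<Rightarrow> 'o \<Rightarrow> 'a \<Rightarrow> 'a \<Rightarrow> 'a) \<Rightarrow> ('o \<Rightarrow> 'o \<Rightarrow> 'a) \<Rightarrow> ('o \<Rightarrow> 'a \<Rightarrow> 'a) \<Rightarrow> bool" where
  "strength_respects_kleene C P T tau J B St \<longleftrightarrow>
     (\<forall>X Y Y'.
        cCmp C (pPrd P X Y) (pPrd P X (T Y')) (T (pPrd P X Y'))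
          (tau X Y') (cross C P X Y X (T Y') (cId C X) (B Y Y'))
        = B (pPrd P X Y) (pPrd P X Y')) \<and>
     (\<forall>X Y Y' f g. f \<in> cHom C Y (T Y') \<longrightarrow> g \<in> cHom C Y (T Y') \<longrightarrow>
        cCmp C (pPrd P X Y) (pPrd P X (T Y')) (T (pPrd P X Y'))
          (tau X Y') (cross C P X Y X (T Y') (cId C X) (J Y Y' f g))
        = J (pPrd P X Y) (pPrd P X Y')
            (cCmp C (pPrd P X Y) (pPrd P X (T Y')) (T (pPrd P X Y'))
               (tau X Y') (cross C P X Y X (T Y') (cId C X) f))
            (cCmp C (pPrd P X Y) (pPrd P X (T Y')) (T (pPrd P X Y'))
               (tau X Y') (cross C P X Y X (T Y') (cId C X) g))) \<and>
     (\<forall>X Y k. k \<in> cHom C Y (T Y) \<longrightarrow>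
        cCmp C (pPrd P X Y) (pPrd P X (T Y)) (T (pPrd P X Y))
          (tau X Y) (cross C P X Y X (T Y) (cId C X) (St Y k))
        = St (pPrd P X Y)
            (cCmp C (pPrd P X Y) (pPrd P X (T Y)) (T (pPrd P X Y))
               (tau X Y) (cross C P X Y X (T Y) (cId C X) k)))"

section \<open>Writer monad transform T_M X = T(M x X)\<close>

definition wrT :: "('o, 'a) cart \<Rightarrow> ('o \<Rightarrow> 'o) \<Rightarrow> 'o \<Rightarrow> 'o \<Rightarrow> 'o" where
  "wrT P T M X = T (pPrd P M X)"

definition wrCirc ::
  "('o, 'a) cat \<Rightarrow> ('o, 'a) cart \<Rightarrow> ('o \<Rightarrow> 'o) \<Rightarrow> ('o \<Rightarrow> 'a) \<Rightarrow> ('o \<Rightarrow> 'o \<Rightarrow> 'a \<Rightarrow> 'a) \<Rightarrow>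
   ('o \<Rightarrow> 'o \<Rightarrow> 'a) \<Rightarrow> 'o \<Rightarrow> 'a \<Rightarrow> 'o \<Rightarrow> 'o \<Rightarrow> 'a \<Rightarrow> 'a" where
  "wrCirc C P T eta ext tau M m X Y f =
     (let MY = pPrd P M Y; MMY = pPrd P M MY; MM_Y = pPrd P (pPrd P M M) Y;
          MX = pPrd P M X; MTMY = pPrd P M (T MY) in
      cCmp C MX (T MM_Y) (T MY)
        (Tmap C T eta ext MM_Y MY (cross C P (pPrd P M M) Y M Y m (cId C Y)))
        (cCmp C MX (T MMY) (T MM_Y)
           (Tmap C T eta ext MMY MM_Y (assoc_l C P M M Y))
           (cCmp C MX MTMY (T MMY)
              (tau M MY)
              (cross C P M X M (T MY) (cId C M) f))))"

definition wrEta ::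
  "('o, 'a) cat \<Rightarrow> ('o, 'a) cart \<Rightarrow> ('o \<Rightarrow> 'o) \<Rightarrow> ('o \<Rightarrow> 'a) \<Rightarrow> 'o \<Rightarrow> 'a \<Rightarrow> 'o \<Rightarrow> 'a" where
  "wrEta C P T eta M e X =
     cCmp C X (pPrd P M X) (T (pPrd P M X)) (eta (pPrd P M X))
       (pPair P X M X (cCmp C X (pOne P) M e (pTrm P X)) (cId C X))"

definition wrExt ::
  "('o, 'a) cat \<Rightarrow> ('o, 'a) cart \<Rightarrow> ('o \<Rightarrow> 'o) \<Rightarrow> ('o \<Rightarrow> 'a) \<Rightarrow> ('o \<Rightarrow> 'o \<Rightarrow> 'a \<Rightarrow> 'a) \<Rightarrow>
   ('o \<Rightarrow> 'o \<Rightarrow> 'a) \<Rightarrow> 'o \<Rightarrow> 'a \<Rightarrow> 'o \<Rightarrow> 'o \<Rightarrow> 'a \<Rightarrow> 'a" where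
  "wrExt C P T eta ext tau M m X Y f =
     ext (pPrd P M X) (pPrd P M Y) (wrCirc C P T eta ext tau M m X Y f)"

definition wrJoin :: "('o, 'a) cart \<Rightarrow> ('o \<Rightarrow> 'o \<Rightarrow> 'a \<Rightarrow> 'a \<Rightarrow> 'a) \<Rightarrow> 'o \<Rightarrow> 'o \<Rightarrow> 'o \<Rightarrow> 'a \<Rightarrow> 'a \<Rightarrow> 'a" where
  "wrJoin P J M X Y f g = J X (pPrd P M Y) f g"

definition wrBot :: "('o, 'a) cart \<Rightarrow> ('o \<Rightarrow> 'o \<Rightarrow> 'a) \<Rightarrow> 'o \<Rightarrow> 'o \<Rightarrow> 'o \<Rightarrow> 'a" where
  "wrBot P B M X Y = B X (pPrd P M Y)"

definition wrStar ::
  "('o, 'a) cat \<Rightarrow> ('o, 'a) cart \<Rightarrow> ('o \<Rightarrow> 'o) \<Rightarrow> ('o \<Rightarrow> 'a) \<Rightarrow> ('o \<Rightarrow> 'o \<Rightarrow> 'a \<Rightarrow> 'a) \<Rightarrow>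
   ('o \<Rightarrow> 'o \<Rightarrow> 'a) \<Rightarrow> ('o \<Rightarrow> 'a \<Rightarrow> 'a) \<Rightarrow> 'o \<Rightarrow> 'a \<Rightarrow> 'a \<Rightarrow> 'o \<Rightarrow> 'a \<Rightarrow> 'a" where
  "wrStar C P T eta ext tau St M e m X f =
     cCmp C X (T (pPrd P M X)) (T (pPrd P M X))
       (ext (pPrd P M X) (pPrd P M X) (St (pPrd P M X) (wrCirc C P T eta ext tau M m X X f)))
       (wrEta C P T eta M e X)"

end

theory Submission
  imports Defs
begin

text \<open>Both transformed Kleisli categories embed faithfully into the Kleisli category of T,
  via maps that preserve identities, composition, joins, bottom and star. Preserving joins makes
  such a map an order embedding on each hom-set, so it reflects all Kleene-Kozen laws, including
  the least-prefixpoint characterisations of star.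

  For the state monad the embedding is the uncurrying bijection C(X, T(Y x S)^S) -> C(X x S, T(Y x S)).
  For the writer monad it is f \<mapsto> f\<degree>, which has the left inverse h \<mapsto> h o <e o !, id> by the unit
  laws of the strength and of the monoid. Joins and bottom are preserved because the strength
  preserves them. For the star, (f\<degree>)\<degree> = f\<degree> o act with act = (m x id) o assoc\<inverse>, so eta o act
  intertwines tau o (id x f\<degree>) with f\<degree>; and in a Kleene-Kozen category a o s = k o a implies
  a o s* = k* o a.\<close>

locale kk_category =
  fixes K :: "('o, 'a, 'z) kk_scheme"
  assumes kk: "is_kk_category K"
begin

lemma
  shows id_hom: "cId K X \<in> cHom K X X"
    and comp_hom: "f \<in> cHom K X Y \<Longrightarrow> g \<in> cHom K Y Z \<Longrightarrow> cCmp K X Y Z g f \<in> cHom K X Z"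
    and comp_id_left: "f \<in> cHom K X Y \<Longrightarrow> cCmp K X Y Y (cId K Y) f = f"
    and comp_id_right: "f \<in> cHom K X Y \<Longrightarrow> cCmp K X X Y f (cId K X) = f"
    and comp_assoc: "f \<in> cHom K W X \<Longrightarrow> g \<in> cHom K X Y \<Longrightarrow> h \<in> cHom K Y Z \<Longrightarrow>
      cCmp K W X Z (cCmp K X Y Z h g) f = cCmp K W Y Z h (cCmp K W X Y g f)"
    and join_hom: "f \<in> cHom K X Y \<Longrightarrow> g \<in> cHom K X Y \<Longrightarrow> kJoin K X Y f g \<in> cHom K X Y"
    and join_assoc: "f \<in> cHom K X Y \<Longrightarrow> g \<in> cHom K X Y \<Longrightarrow> h \<in> cHom K X Y \<Longrightarrow>
      kJoin K X Y (kJoin K X Y f g) h = kJoin K X Y f (kJoin K X Y g h)"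
    and join_commute: "f \<in> cHom K X Y \<Longrightarrow> g \<in> cHom K X Y \<Longrightarrow> kJoin K X Y f g = kJoin K X Y g f"
    and join_idem: "f \<in> cHom K X Y \<Longrightarrow> kJoin K X Y f f = f"
    and bot_hom: "kBot K X Y \<in> cHom K X Y"
    and join_bot: "f \<in> cHom K X Y \<Longrightarrow> kJoin K X Y (kBot K X Y) f = f"
    and comp_join_left: "f \<in> cHom K X Y \<Longrightarrow> g \<in> cHom K Y Z \<Longrightarrow> h \<in> cHom K Y Z \<Longrightarrow>
      cCmp K X Y Z (kJoin K Y Z g h) f = kJoin K X Z (cCmp K X Y Z g f) (cCmp K X Y Z h f)"
    and comp_bot_left: "f \<in> cHom K X Y \<Longrightarrow> cCmp K X Y Z (kBot K Y Z) f = kBot K X Z"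
    and comp_join_right: "f \<in> cHom K X Y \<Longrightarrow> h \<in> cHom K X Y \<Longrightarrow> g \<in> cHom K Y Z \<Longrightarrow>
      cCmp K X Y Z g (kJoin K X Y f h) = kJoin K X Z (cCmp K X Y Z g f) (cCmp K X Y Z g h)"
    and comp_bot_right: "g \<in> cHom K Y Z \<Longrightarrow> cCmp K X Y Z g (kBot K X Y) = kBot K X Z"
    and star_hom: "f \<in> cHom K X X \<Longrightarrow> kStar K X f \<in> cHom K X X"
    and comp_star_lpp: "f \<in> cHom K Y Y \<Longrightarrow> g \<in> cHom K Y Z \<Longrightarrow>
      least_prefixpoint K Y Z (\<lambda>x. kJoin K Y Z g (cCmp K Y Y Z x f)) (cCmp K Y Y Z g (kStar K Y f))"
    and star_comp_lpp: "f \<in> cHom K Y Y \<Longrightarrow> h \<in> cHom K X Y \<Longrightarrow>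
      least_prefixpoint K X Y (\<lambda>x. kJoin K X Y h (cCmp K X Y Y f x)) (cCmp K X Y Y (kStar K Y f) h)"
  using kk unfolding is_kk_category_def is_category_def by metis+

lemma le_antisym:
  "x \<in> cHom K X Y \<Longrightarrow> y \<in> cHom K X Y \<Longrightarrow> kk_le K X Y x y \<Longrightarrow> kk_le K X Y y x \<Longrightarrow> x = y"
  unfolding kk_le_def by (metis join_commute)

lemma comp_mono_left:
  "f \<in> cHom K X Y \<Longrightarrow> x \<in> cHom K Y Z \<Longrightarrow> y \<in> cHom K Y Z \<Longrightarrow> kk_le K Y Z x y \<Longrightarrow>
   kk_le K X Z (cCmp K X Y Z x f) (cCmp K X Y Z y f)"
  unfolding kk_le_def by (metis comp_join_left)

lemma comp_mono_right:
  "g \<in> cHom K Y Z \<Longrightarrow> x \<in> cHom K X Y \<Longrightarrow> y \<in> cHom K X Y \<Longrightarrow> kk_le K X Y x y \<Longrightarrow>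
   kk_le K X Z (cCmp K X Y Z g x) (cCmp K X Y Z g y)"
  unfolding kk_le_def by (metis comp_join_right)

lemma star_unfold_left:
  "k \<in> cHom K X X \<Longrightarrow> kk_le K X X (kJoin K X X (cId K X) (cCmp K X X X (kStar K X k) k)) (kStar K X k)"
  using comp_star_lpp[OF _ id_hom] star_hom comp_id_left
  unfolding least_prefixpoint_def by metis

lemma star_unfold_right:
  "s \<in> cHom K X X \<Longrightarrow> kk_le K X X (kJoin K X X (cId K X) (cCmp K X X X s (kStar K X s))) (kStar K X s)"
  using star_comp_lpp[OF _ id_hom] star_hom comp_id_right
  unfolding least_prefixpoint_def by metis

text \<open>Each of a o s* and k* o a is a prefixpoint of the map whose least prefixpoint
  is the other one.\<close>

lemma star_commute:
  assumes a: "a \<in> cHom K A B" and s: "s \<in> cHom K A A" and k: "k \<in> cHom K B B"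
    and comm: "cCmp K A A B a s = cCmp K A B B k a"
  shows "cCmp K A A B a (kStar K A s) = cCmp K A B B (kStar K B k) a"
proof -
  let ?p = "cCmp K A A B a (kStar K A s)" and ?q = "cCmp K A B B (kStar K B k) a"
  have p: "?p \<in> cHom K A B" and q: "?q \<in> cHom K A B"
    using a s k by (simp_all add: comp_hom star_hom)
  have "kk_le K A B ?p ?q"
  proof -
    have "kJoin K A B a (cCmp K A A B ?q s) =
        cCmp K A B B (kJoin K B B (cId K B) (cCmp K B B B (kStar K B k) k)) a"
      using a s k by (simp add: comp_assoc comm star_hom comp_join_left comp_id_left id_hom comp_hom)
    also have "kk_le K A B \<dots> ?q"
      using a k by (intro comp_mono_left star_unfold_left join_hom id_hom comp_hom star_hom)
    finally show ?thesis
      using comp_star_lpp[OF s a] q unfolding least_prefixpoint_def by blast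
  qed
  moreover have "kk_le K A B ?q ?p"
  proof -
    have "kJoin K A B a (cCmp K A B B k ?p) =
        cCmp K A A B a (kJoin K A A (cId K A) (cCmp K A A A s (kStar K A s)))"
      using a s k by (simp add: comp_assoc[symmetric] comm star_hom comp_join_right comp_id_right id_hom comp_hom)
    also have "kk_le K A B \<dots> ?p"
      using a s by (intro comp_mono_right star_unfold_right join_hom id_hom comp_hom star_hom)
    finally show ?thesis
      using star_comp_lpp[OF k a] p unfolding least_prefixpoint_def by blast
  qed
  ultimately show ?thesis using le_antisym p q by blast
qed

end

lemma least_prefixpoint_reflect:
  fixes K :: "('o, 'a, 'z) kk_scheme" and K' :: "('o, 'a, 'w) kk_scheme"
  assumes hom: "\<And>x. x \<in> cHom K' X Y \<Longrightarrow> \<Phi> x \<in> cHom K X' Y'"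
    and inj: "inj_on \<Phi> (cHom K' X Y)"
    and join_hom: "\<And>x y. x \<in> cHom K' X Y \<Longrightarrow> y \<in> cHom K' X Y \<Longrightarrow> kJoin K' X Y x y \<in> cHom K' X Y"
    and join: "\<And>x y. x \<in> cHom K' X Y \<Longrightarrow> y \<in> cHom K' X Y \<Longrightarrow>
      \<Phi> (kJoin K' X Y x y) = kJoin K X' Y' (\<Phi> x) (\<Phi> y)"
    and G_hom: "\<And>x. x \<in> cHom K' X Y \<Longrightarrow> G x \<in> cHom K' X Y"
    and G: "\<And>x. x \<in> cHom K' X Y \<Longrightarrow> \<Phi> (G x) = H (\<Phi> x)"
    and p: "p \<in> cHom K' X Y"
    and lpp: "least_prefixpoint K X' Y' H (\<Phi> p)"
  shows "least_prefixpoint K' X Y G p"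
proof -
  have le_iff: "kk_le K' X Y x y \<longleftrightarrow> kk_le K X' Y' (\<Phi> x) (\<Phi> y)"
    if "x \<in> cHom K' X Y" "y \<in> cHom K' X Y" for x y
    unfolding kk_le_def using that join_hom join inj_onD[OF inj] by metis
  show ?thesis
    using lpp p hom G_hom unfolding least_prefixpoint_def by (simp add: le_iff G)
qed

lemma is_category_reflect:
  fixes K :: "('o, 'a, 'z) cat_scheme" and K' :: "('o, 'a, 'w) cat_scheme"
    and F :: "'o \<Rightarrow> 'o" and \<Phi> :: "'o \<Rightarrow> 'o \<Rightarrow> 'a \<Rightarrow> 'a"
  assumes cat: "is_category K"
    and hom: "\<And>X Y f. f \<in> cHom K' X Y \<Longrightarrow> \<Phi> X Y f \<in> cHom K (F X) (F Y)"
    and inj: "\<And>X Y. inj_on (\<Phi> X Y) (cHom K' X Y)"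
    and id_hom': "\<And>X. cId K' X \<in> cHom K' X X"
    and map_id: "\<And>X. \<Phi> X X (cId K' X) = cId K (F X)"
    and comp_hom': "\<And>X Y Z f g. f \<in> cHom K' X Y \<Longrightarrow> g \<in> cHom K' Y Z \<Longrightarrow> cCmp K' X Y Z g f \<in> cHom K' X Z"
    and map_comp: "\<And>X Y Z f g. f \<in> cHom K' X Y \<Longrightarrow> g \<in> cHom K' Y Z \<Longrightarrow>
        \<Phi> X Z (cCmp K' X Y Z g f) = cCmp K (F X) (F Y) (F Z) (\<Phi> Y Z g) (\<Phi> X Y f)"
  shows "is_category K'"
proof -
  have eq: "x = y" if "x \<in> cHom K' X Y" "y \<in> cHom K' X Y" "\<Phi> X Y x = \<Phi> X Y y" for X Y x y
    using inj_onD[OF inj] that by blast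
  note simps = hom id_hom' map_id comp_hom' map_comp
  have id_left: "\<And>X Y f. f \<in> cHom K X Y \<Longrightarrow> cCmp K X Y Y (cId K Y) f = f"
    and id_right: "\<And>X Y f. f \<in> cHom K X Y \<Longrightarrow> cCmp K X X Y f (cId K X) = f"
    and assoc: "\<And>W X Y Z f g h. f \<in> cHom K W X \<Longrightarrow> g \<in> cHom K X Y \<Longrightarrow> h \<in> cHom K Y Z \<Longrightarrow>
      cCmp K W Y Z h (cCmp K W X Y g f) = cCmp K W X Z (cCmp K X Y Z h g) f"
    using cat unfolding is_category_def by blast+
  show ?thesis
    unfolding is_category_def
  proof (intro conjI allI impI id_hom' comp_hom')
    fix X Y f assume f: "f \<in> cHom K' X Y"
    show "cCmp K' X Y Y (cId K' Y) f = f"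
      by (rule eq[where X=X and Y=Y]) (simp_all add: f simps id_left)
    show "cCmp K' X X Y f (cId K' X) = f"
      by (rule eq[where X=X and Y=Y]) (simp_all add: f simps id_right)
  next
    fix W X Y Z f g h assume fgh: "f \<in> cHom K' W X" "g \<in> cHom K' X Y" "h \<in> cHom K' Y Z"
    show "cCmp K' W Y Z h (cCmp K' W X Y g f) = cCmp K' W X Z (cCmp K' X Y Z h g) f"
      by (rule eq[where X=W and Y=Z]) (use fgh in \<open>simp_all add: simps assoc\<close>)
  qed
qed

lemma (in kk_category) is_kk_category_reflect:
  fixes K' :: "('o, 'a, 'w) kk_scheme"
    and F :: "'o \<Rightarrow> 'o" and \<Phi> :: "'o \<Rightarrow> 'o \<Rightarrow> 'a \<Rightarrow> 'a"
  assumes hom: "\<And>X Y f. f \<in> cHom K' X Y \<Longrightarrow> \<Phi> X Y f \<in> cHom K (F X) (F Y)"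
    and inj: "\<And>X Y. inj_on (\<Phi> X Y) (cHom K' X Y)"
    and id_hom': "\<And>X. cId K' X \<in> cHom K' X X"
    and map_id: "\<And>X. \<Phi> X X (cId K' X) = cId K (F X)"
    and comp_hom': "\<And>X Y Z f g. f \<in> cHom K' X Y \<Longrightarrow> g \<in> cHom K' Y Z \<Longrightarrow> cCmp K' X Y Z g f \<in> cHom K' X Z"
    and map_comp: "\<And>X Y Z f g. f \<in> cHom K' X Y \<Longrightarrow> g \<in> cHom K' Y Z \<Longrightarrow>
        \<Phi> X Z (cCmp K' X Y Z g f) = cCmp K (F X) (F Y) (F Z) (\<Phi> Y Z g) (\<Phi> X Y f)"
    and join_hom': "\<And>X Y f g. f \<in> cHom K' X Y \<Longrightarrow> g \<in> cHom K' X Y \<Longrightarrow> kJoin K' X Y f g \<in> cHom K' X Y"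
    and map_join: "\<And>X Y f g. f \<in> cHom K' X Y \<Longrightarrow> g \<in> cHom K' X Y \<Longrightarrow>
        \<Phi> X Y (kJoin K' X Y f g) = kJoin K (F X) (F Y) (\<Phi> X Y f) (\<Phi> X Y g)"
    and bot_hom': "\<And>X Y. kBot K' X Y \<in> cHom K' X Y"
    and map_bot: "\<And>X Y. \<Phi> X Y (kBot K' X Y) = kBot K (F X) (F Y)"
    and star_hom': "\<And>X f. f \<in> cHom K' X X \<Longrightarrow> kStar K' X f \<in> cHom K' X X"
    and map_star: "\<And>X f. f \<in> cHom K' X X \<Longrightarrow> \<Phi> X X (kStar K' X f) = kStar K (F X) (\<Phi> X X f)"
  shows "is_kk_category K'"
proof -
  have eq: "x = y" if "x \<in> cHom K' X Y" "y \<in> cHom K' X Y" "\<Phi> X Y x = \<Phi> X Y y" for X Y x y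
    using inj_onD[OF inj] that by blast
  note simps = hom comp_hom' map_comp join_hom' map_join bot_hom' map_bot
  have cat: "is_category K'"
    by (rule is_category_reflect[where K = K, OF _ hom inj id_hom' map_id comp_hom' map_comp])
      (use kk in \<open>simp add: is_kk_category_def\<close>)
  have comp_star_lpp': "least_prefixpoint K' Y Z (\<lambda>x. kJoin K' Y Z g (cCmp K' Y Y Z x f))
      (cCmp K' Y Y Z g (kStar K' Y f))"
    if f: "f \<in> cHom K' Y Y" and g: "g \<in> cHom K' Y Z" for Y Z f g
  proof (rule least_prefixpoint_reflect[where \<Phi> = "\<Phi> Y Z" and K = K, OF hom inj join_hom'])
    show "least_prefixpoint K (F Y) (F Z)
        (\<lambda>x. kJoin K (F Y) (F Z) (\<Phi> Y Z g) (cCmp K (F Y) (F Y) (F Z) x (\<Phi> Y Y f)))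
        (\<Phi> Y Z (cCmp K' Y Y Z g (kStar K' Y f)))"
      using comp_star_lpp[OF hom[OF f] hom[OF g]] f g by (simp add: map_comp map_star star_hom')
  qed (use f g in \<open>simp_all add: simps star_hom'\<close>)
  have star_comp_lpp': "least_prefixpoint K' X Y (\<lambda>x. kJoin K' X Y h (cCmp K' X Y Y f x))
      (cCmp K' X Y Y (kStar K' Y f) h)"
    if f: "f \<in> cHom K' Y Y" and h: "h \<in> cHom K' X Y" for X Y f h
  proof (rule least_prefixpoint_reflect[where \<Phi> = "\<Phi> X Y" and K = K, OF hom inj join_hom'])
    show "least_prefixpoint K (F X) (F Y)
        (\<lambda>x. kJoin K (F X) (F Y) (\<Phi> X Y h) (cCmp K (F X) (F Y) (F Y) (\<Phi> Y Y f) x))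
        (\<Phi> X Y (cCmp K' X Y Y (kStar K' Y f) h))"
      using star_comp_lpp[OF hom[OF f] hom[OF h]] f h by (simp add: map_comp map_star star_hom')
  qed (use f h in \<open>simp_all add: simps star_hom'\<close>)
  have join_commute': "kJoin K' X Y f g = kJoin K' X Y g f"
    if "f \<in> cHom K' X Y" "g \<in> cHom K' X Y" for X Y f g
    by (rule eq[where X=X and Y=Y]) (use that in \<open>simp_all add: simps join_commute\<close>)
  have join_assoc': "kJoin K' X Y (kJoin K' X Y f g) h = kJoin K' X Y f (kJoin K' X Y g h)"
    if "f \<in> cHom K' X Y" "g \<in> cHom K' X Y" "h \<in> cHom K' X Y" for X Y f g h
    by (rule eq[where X=X and Y=Y]) (use that in \<open>simp_all add: simps join_hom join_assoc\<close>)
  have join_idem': "kJoin K' X Y f f = f" if "f \<in> cHom K' X Y" for X Y f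
    by (rule eq[where X=X and Y=Y]) (use that in \<open>simp_all add: simps join_idem\<close>)
  have join_bot': "kJoin K' X Y (kBot K' X Y) f = f" if "f \<in> cHom K' X Y" for X Y f
    by (rule eq[where X=X and Y=Y]) (use that in \<open>simp_all add: simps join_bot\<close>)
  have comp_join_left': "cCmp K' X Y Z (kJoin K' Y Z g h) f = kJoin K' X Z (cCmp K' X Y Z g f) (cCmp K' X Y Z h f)"
    if "f \<in> cHom K' X Y" "g \<in> cHom K' Y Z" "h \<in> cHom K' Y Z" for X Y Z f g h
    by (rule eq[where X=X and Y=Z]) (use that in \<open>simp_all add: simps comp_join_left\<close>)
  have comp_join_right': "cCmp K' X Y Z g (kJoin K' X Y f h) = kJoin K' X Z (cCmp K' X Y Z g f) (cCmp K' X Y Z g h)"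
    if "f \<in> cHom K' X Y" "h \<in> cHom K' X Y" "g \<in> cHom K' Y Z" for X Y Z f g h
    by (rule eq[where X=X and Y=Z]) (use that in \<open>simp_all add: simps comp_join_right\<close>)
  have comp_bot_left': "cCmp K' X Y Z (kBot K' Y Z) f = kBot K' X Z" if "f \<in> cHom K' X Y" for X Y Z f
    by (rule eq[where X=X and Y=Z]) (use that in \<open>simp_all add: simps comp_bot_left\<close>)
  have comp_bot_right': "cCmp K' X Y Z g (kBot K' X Y) = kBot K' X Z" if "g \<in> cHom K' Y Z" for X Y Z g
    by (rule eq[where X=X and Y=Z]) (use that in \<open>simp_all add: simps comp_bot_right\<close>)
  show ?thesis
    unfolding is_kk_category_def
    by (intro conjI allI impI cat join_hom' bot_hom' star_hom' comp_star_lpp' star_comp_lpp'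
        join_commute' join_assoc' join_idem' join_bot' comp_join_left' comp_join_right'
        comp_bot_left' comp_bot_right')
qed

locale fp_category =
  fixes C :: "('o,'a) cat" and P :: "('o,'a) cart"
  assumes cat: "is_category C" and fp: "has_finite_products C P"
begin

abbreviation "hom \<equiv> cHom C"
abbreviation "cmp \<equiv> cCmp C"
abbreviation "idm \<equiv> cId C"
abbreviation "prd \<equiv> pPrd P"
abbreviation "p1 \<equiv> pPi1 P"
abbreviation "p2 \<equiv> pPi2 P"
abbreviation "pair \<equiv> pPair P"
abbreviation "trm \<equiv> pTrm P"
abbreviation "one \<equiv> pOne P"

lemma id_hom[simp]: "idm X \<in> hom X X" using cat unfolding is_category_def by blast

lemma comp_hom[simp]: "f \<in> hom X Y \<Longrightarrow> g \<in> hom Y Z \<Longrightarrow> cmp X Y Z g f \<in> hom X Z"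
  using cat unfolding is_category_def by blast

lemma comp_id_left[simp]: "f \<in> hom X Y \<Longrightarrow> cmp X Y Y (idm Y) f = f"
  using cat unfolding is_category_def by blast

lemma comp_id_right[simp]: "f \<in> hom X Y \<Longrightarrow> cmp X X Y f (idm X) = f"
  using cat unfolding is_category_def by blast

lemma comp_assoc[simp]: "f \<in> hom W X \<Longrightarrow> g \<in> hom X Y \<Longrightarrow> h \<in> hom Y Z \<Longrightarrow>
   cmp W X Z (cmp X Y Z h g) f = cmp W Y Z h (cmp W X Y g f)"
  using cat unfolding is_category_def by metis

lemma pi1_hom[simp]: "p1 X Y \<in> hom (prd X Y) X" using fp unfolding has_finite_products_def by blast

lemma pi2_hom[simp]: "p2 X Y \<in> hom (prd X Y) Y" using fp unfolding has_finite_products_def by blast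

lemma term_hom[simp]: "trm X \<in> hom X one" using fp unfolding has_finite_products_def by blast

lemma term_unique: "f \<in> hom X one \<Longrightarrow> f = trm X" using fp unfolding has_finite_products_def by blast

lemma term_comp[simp]: "f \<in> hom X Y \<Longrightarrow> cmp X Y one (trm Y) f = trm X"
  by (rule term_unique) simp

lemma pair_hom[simp]: "f \<in> hom Z X \<Longrightarrow> g \<in> hom Z Y \<Longrightarrow> pair Z X Y f g \<in> hom Z (prd X Y)"
  using fp unfolding has_finite_products_def by blast

lemma pi1_pair[simp]: "f \<in> hom Z X \<Longrightarrow> g \<in> hom Z Y \<Longrightarrow> cmp Z (prd X Y) X (p1 X Y) (pair Z X Y f g) = f"
  using fp unfolding has_finite_products_def by blast

lemma pi2_pair[simp]: "f \<in> hom Z X \<Longrightarrow> g \<in> hom Z Y \<Longrightarrow> cmp Z (prd X Y) Y (p2 X Y) (pair Z X Y f g) = g"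
  using fp unfolding has_finite_products_def by blast

lemma pair_eta: "h \<in> hom Z (prd X Y) \<Longrightarrow>
  pair Z X Y (cmp Z (prd X Y) X (p1 X Y) h) (cmp Z (prd X Y) Y (p2 X Y) h) = h"
  using fp unfolding has_finite_products_def by blast

lemma pair_pi1_pi2[simp]: "pair (prd X Y) X Y (p1 X Y) (p2 X Y) = idm (prd X Y)"
  using pair_eta[of "idm (prd X Y)" "prd X Y" X Y] by simp

lemma pair_comp[simp]: "f \<in> hom Z X \<Longrightarrow> g \<in> hom Z Y \<Longrightarrow> r \<in> hom W Z \<Longrightarrow>
  cmp W Z (prd X Y) (pair Z X Y f g) r = pair W X Y (cmp W Z X f r) (cmp W Z Y g r)"
proof -
  assume a: "f \<in> hom Z X" "g \<in> hom Z Y" "r \<in> hom W Z"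
  have "cmp W Z (prd X Y) (pair Z X Y f g) r = pair W X Y
     (cmp W (prd X Y) X (p1 X Y) (cmp W Z (prd X Y) (pair Z X Y f g) r))
     (cmp W (prd X Y) Y (p2 X Y) (cmp W Z (prd X Y) (pair Z X Y f g) r))"
    by (rule pair_eta[symmetric]) (use a in simp)
  also have "\<dots> = pair W X Y (cmp W Z X f r) (cmp W Z Y g r)"
    using a by (simp flip: comp_assoc)
  finally show ?thesis .
qed

lemma comp_assoc_subst: "cmp X Y Z g f = h \<Longrightarrow> r \<in> hom W X \<Longrightarrow> f \<in> hom X Y \<Longrightarrow> g \<in> hom Y Z \<Longrightarrow>
  cmp W Y Z g (cmp W X Y f r) = cmp W X Z h r"
  by (metis comp_assoc)

lemma comp_assoc_subst3: "cmp X Y Z g (cmp X X' Y f k) = h \<Longrightarrow> r \<in> hom W X \<Longrightarrow> k \<in> hom X X' \<Longrightarrow> f \<in> hom X' Y \<Longrightarrow> g \<in> hom Y Z \<Longrightarrow>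
  cmp W Y Z g (cmp W X' Y f (cmp W X X' k r)) = cmp W X Z h r"
  by (metis comp_assoc comp_hom)

abbreviation "crs \<equiv> cross C P"

lemma cross_hom[simp]: "f \<in> hom X X' \<Longrightarrow> g \<in> hom Y Y' \<Longrightarrow> crs X Y X' Y' f g \<in> hom (prd X Y) (prd X' Y')"
  unfolding cross_def by simp

lemma cross_id[simp]: "crs X Y X Y (idm X) (idm Y) = idm (prd X Y)"
  unfolding cross_def by simp

lemma cross_comp[simp]: "f \<in> hom X X' \<Longrightarrow> g \<in> hom Y Y' \<Longrightarrow> f' \<in> hom X' X'' \<Longrightarrow> g' \<in> hom Y' Y'' \<Longrightarrow>
  cmp (prd X Y) (prd X' Y') (prd X'' Y'') (crs X' Y' X'' Y'' f' g') (crs X Y X' Y' f g)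
  = crs X Y X'' Y'' (cmp X X' X'' f' f) (cmp Y Y' Y'' g' g)"
  unfolding cross_def by simp

lemma cross_comp_assoc[simp]: "f \<in> hom X X' \<Longrightarrow> g \<in> hom Y Y' \<Longrightarrow> f' \<in> hom X' X'' \<Longrightarrow> g' \<in> hom Y' Y'' \<Longrightarrow> r \<in> hom W (prd X Y) \<Longrightarrow>
  cmp W (prd X' Y') (prd X'' Y'') (crs X' Y' X'' Y'' f' g') (cmp W (prd X Y) (prd X' Y') (crs X Y X' Y' f g) r)
  = cmp W (prd X Y) (prd X'' Y'') (crs X Y X'' Y'' (cmp X X' X'' f' f) (cmp Y Y' Y'' g' g)) r"
  by (subst comp_assoc_subst[OF cross_comp]) simp_all

lemma assoc_l_hom[simp]: "assoc_l C P X Y Z \<in> hom (prd X (prd Y Z)) (prd (prd X Y) Z)"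
  unfolding assoc_l_def Let_def by simp

lemma assoc_r_hom[simp]: "assoc_r C P X Y Z \<in> hom (prd (prd X Y) Z) (prd X (prd Y Z))"
  unfolding assoc_r_def Let_def by simp

lemma pair_term_pi2[simp]: "pair (prd one W) one W (trm (prd one W)) (p2 one W) = idm (prd one W)"
proof -
  have "p1 one W = trm (prd one W)" by (rule term_unique) simp
  then show ?thesis using pair_pi1_pi2[of one W] by simp
qed

end

locale fp_kleisli_triple = fp_category +
  fixes T and eta and ext
  assumes kleisli_triple: "is_kleisli_triple C T eta ext"
begin

lemma eta_hom[simp]: "eta X \<in> hom X (T X)" using kleisli_triple unfolding is_kleisli_triple_def by blast

lemma ext_hom[simp]: "f \<in> hom X (T Y) \<Longrightarrow> ext X Y f \<in> hom (T X) (T Y)"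
  using kleisli_triple unfolding is_kleisli_triple_def by blast

lemma ext_eta_id[simp]: "ext X X (eta X) = idm (T X)" using kleisli_triple unfolding is_kleisli_triple_def by blast

lemma ext_comp_eta[simp]: "f \<in> hom X (T Y) \<Longrightarrow> cmp X (T X) (T Y) (ext X Y f) (eta X) = f"
  using kleisli_triple unfolding is_kleisli_triple_def by blast

lemma ext_comp_eta_assoc[simp]: "f \<in> hom X (T Y) \<Longrightarrow> r \<in> hom W X \<Longrightarrow>
   cmp W (T X) (T Y) (ext X Y f) (cmp W X (T X) (eta X) r) = cmp W X (T Y) f r"
  by (metis ext_comp_eta comp_assoc eta_hom ext_hom)

lemma ext_comp_ext[simp]: "f \<in> hom X (T Y) \<Longrightarrow> g \<in> hom Y (T Z) \<Longrightarrow>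
   cmp (T X) (T Y) (T Z) (ext Y Z g) (ext X Y f) = ext X Z (cmp X (T Y) (T Z) (ext Y Z g) f)"
  using kleisli_triple unfolding is_kleisli_triple_def by metis

lemma ext_comp_ext_assoc[simp]: "f \<in> hom X (T Y) \<Longrightarrow> g \<in> hom Y (T Z) \<Longrightarrow> r \<in> hom W (T X) \<Longrightarrow>
   cmp W (T Y) (T Z) (ext Y Z g) (cmp W (T X) (T Y) (ext X Y f) r)
   = cmp W (T X) (T Z) (ext X Z (cmp X (T Y) (T Z) (ext Y Z g) f)) r"
  by (metis ext_comp_ext comp_assoc ext_hom)

abbreviation "Tm \<equiv> Tmap C T eta ext"

lemma Tmap_eq: "Tm X Y f = ext X Y (cmp X Y (T Y) (eta Y) f)" by (simp add: Tmap_def)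

end

locale fp_kleene_monad = fp_kleisli_triple +
  fixes J B St
  assumes kleisli_kk: "is_kk_category (kleisli_kk C T eta ext J B St)"
begin

sublocale kleisli: kk_category "kleisli_kk C T eta ext J B St"
  by (rule kk_category.intro) (rule kleisli_kk)

lemma join_hom[simp]: "f \<in> hom X (T Y) \<Longrightarrow> g \<in> hom X (T Y) \<Longrightarrow> J X Y f g \<in> hom X (T Y)"
  using kleisli.join_hom by (simp add: kleisli_kk_def)

lemma bot_hom[simp]: "B X Y \<in> hom X (T Y)"
  using kleisli.bot_hom by (simp add: kleisli_kk_def)

lemma star_hom[simp]: "f \<in> hom X (T X) \<Longrightarrow> St X f \<in> hom X (T X)"
  using kleisli.star_hom by (simp add: kleisli_kk_def)

lemma ext_join: "f \<in> hom X (T Y) \<Longrightarrow> g \<in> hom X (T Y) \<Longrightarrow> h \<in> hom Y (T Z) \<Longrightarrow>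
  cmp X (T Y) (T Z) (ext Y Z h) (J X Y f g) = J X Z (cmp X (T Y) (T Z) (ext Y Z h) f) (cmp X (T Y) (T Z) (ext Y Z h) g)"
  using kleisli.comp_join_right[of f X Y g h Z] by (simp add: kleisli_kk_def)

lemma ext_bot: "h \<in> hom Y (T Z) \<Longrightarrow> cmp X (T Y) (T Z) (ext Y Z h) (B X Y) = B X Z"
  using kleisli.comp_bot_right[of h Y Z X] by (simp add: kleisli_kk_def)

lemma star_commute:
  assumes "a \<in> hom A (T B')" "s \<in> hom A (T A)" "k \<in> hom B' (T B')"
    and "cmp A (T A) (T B') (ext A B' a) s = cmp A (T B') (T B') (ext B' B' k) a"
  shows "cmp A (T A) (T B') (ext A B' a) (St A s) = cmp A (T B') (T B') (ext B' B' (St B' k)) a"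
  using kleisli.star_commute[of a A B' s k] assms by (simp add: kleisli_kk_def)

end

locale cc_category = fp_category +
  fixes E
  assumes ccc: "is_ccc C P E"
begin

abbreviation "ex \<equiv> eExp E"
abbreviation "ev \<equiv> eEv E"
abbreviation "cur \<equiv> eCur E"
abbreviation "unc \<equiv> uncur C P E"

lemma ev_hom[simp]: "ev S B \<in> hom (prd (ex S B) S) B" using ccc unfolding is_ccc_def by blast

lemma cur_hom[simp]: "h \<in> hom (prd A S) B \<Longrightarrow> cur A S B h \<in> hom A (ex S B)"
  using ccc unfolding is_ccc_def by blast

lemma unc_cur[simp]: "h \<in> hom (prd A S) B \<Longrightarrow> unc A S B (cur A S B h) = h"
  using ccc unfolding is_ccc_def uncur_def by blast

lemma cur_unc[simp]: "k \<in> hom A (ex S B) \<Longrightarrow> cur A S B (unc A S B k) = k"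
  using ccc unfolding is_ccc_def uncur_def by blast

lemma unc_hom[simp]: "k \<in> hom A (ex S B) \<Longrightarrow> unc A S B k \<in> hom (prd A S) B"
  unfolding uncur_def by simp

lemma unc_id[simp]: "unc (ex S B) S B (idm (ex S B)) = ev S B"
  unfolding uncur_def by simp

lemma ev_cross[simp]: "cmp (prd A S) (prd (ex S B) S) B (ev S B) (crs A S (ex S B) S k (idm S)) = unc A S B k"
  unfolding uncur_def ..

lemma unc_inj: "k \<in> hom A (ex S B) \<Longrightarrow> k' \<in> hom A (ex S B) \<Longrightarrow> unc A S B k = unc A S B k' \<Longrightarrow> k = k'"
  by (metis cur_unc)

lemma unc_comp: "k \<in> hom A (ex S B) \<Longrightarrow> f \<in> hom A' A \<Longrightarrow>
  unc A' S B (cmp A' A (ex S B) k f) = cmp (prd A' S) (prd A S) B (unc A S B k) (crs A' S A S f (idm S))"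
proof -
  assume a: "k \<in> hom A (ex S B)" "f \<in> hom A' A"
  have "crs A' S (ex S B) S (cmp A' A (ex S B) k f) (idm S) =
        cmp (prd A' S) (prd A S) (prd (ex S B) S) (crs A S (ex S B) S k (idm S)) (crs A' S A S f (idm S))"
    using a by simp
  then show ?thesis using a unfolding uncur_def by (simp del: ev_cross)
qed

end

locale state_monad = cc_category + fp_kleisli_triple +
  fixes S :: 'a
begin

abbreviation "sEta \<equiv> stEta P E T eta S"
abbreviation "sExt \<equiv> stExt C P E T ext S"

lemma stT_eq[simp]: "stT P E T S X = ex S (T (prd X S))"
  unfolding stT_def ..

lemma stEta_hom[simp]: "sEta X \<in> hom X (ex S (T (prd X S)))"
  unfolding stEta_def by simp

lemma unc_stEta[simp]: "unc X S (T (prd X S)) (sEta X) = eta (prd X S)"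
  unfolding stEta_def by simp

lemma stExt_hom[simp]:
  "f \<in> hom X (ex S (T (prd Y S))) \<Longrightarrow> sExt X Y f \<in> hom (ex S (T (prd X S))) (ex S (T (prd Y S)))"
  unfolding stExt_def Let_def by simp

lemma unc_stExt: "f \<in> hom X (ex S (T (prd Y S))) \<Longrightarrow>
  unc (ex S (T (prd X S))) S (T (prd Y S)) (sExt X Y f) =
  cmp (prd (ex S (T (prd X S))) S) (T (prd X S)) (T (prd Y S))
    (ext (prd X S) (prd Y S) (unc X S (T (prd Y S)) f)) (ev S (T (prd X S)))"
  unfolding stExt_def Let_def by simp

lemma unc_stExt_comp[simp]: "f \<in> hom X (ex S (T (prd Y S))) \<Longrightarrow> k \<in> hom A (ex S (T (prd X S))) \<Longrightarrow>
  unc A S (T (prd Y S)) (cmp A (ex S (T (prd X S))) (ex S (T (prd Y S))) (sExt X Y f) k) =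
  cmp (prd A S) (T (prd X S)) (T (prd Y S)) (ext (prd X S) (prd Y S) (unc X S (T (prd Y S)) f))
    (unc A S (T (prd X S)) k)"
  by (simp add: unc_comp unc_stExt)

lemma state_kleisli_triple: "is_kleisli_triple C (stT P E T S) sEta sExt"
  unfolding is_kleisli_triple_def stT_eq
proof (intro conjI allI impI stEta_hom stExt_hom)
  fix X
  show "sExt X X (sEta X) = idm (ex S (T (prd X S)))"
    by (rule unc_inj[where A = "ex S (T (prd X S))" and S = S and B = "T (prd X S)"]) (simp_all add: unc_stExt)
next
  fix X Y f assume f: "f \<in> hom X (ex S (T (prd Y S)))"
  show "cmp X (ex S (T (prd X S))) (ex S (T (prd Y S))) (sExt X Y f) (sEta X) = f"
    by (rule unc_inj[where A = X and S = S and B = "T (prd Y S)"]) (simp_all add: f)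
next
  fix X Y Z f g assume fg: "f \<in> hom X (ex S (T (prd Y S)))" "g \<in> hom Y (ex S (T (prd Z S)))"
  show "sExt X Z (cmp X (ex S (T (prd Y S))) (ex S (T (prd Z S))) (sExt Y Z g) f) =
      cmp (ex S (T (prd X S))) (ex S (T (prd Y S))) (ex S (T (prd Z S))) (sExt Y Z g) (sExt X Y f)"
    by (rule unc_inj[where A = "ex S (T (prd X S))" and S = S and B = "T (prd Z S)"])
      (simp_all add: fg unc_stExt)
qed

end

locale state_kleene = state_monad + fp_kleene_monad

lemma (in state_kleene) state_kleene_monad:
  "kleene_monad C (stT P E T S) sEta sExt (stJoin C P E T J S) (stBot P E T B S) (stStar C P E T St S)"
  unfolding kleene_monad_def
proof (intro conjI cat state_kleisli_triple)
  show "is_kk_category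
      (kleisli_kk C (stT P E T S) sEta sExt (stJoin C P E T J S) (stBot P E T B S) (stStar C P E T St S))"
    by (rule kleisli.is_kk_category_reflect[where F = "\<lambda>X. prd X S" and \<Phi> = "\<lambda>X Y. unc X S (T (prd Y S))"])
      (simp_all add: kleisli_kk_def stJoin_def stBot_def stStar_def inj_on_def unc_inj)
qed

locale fp_strong_monad = fp_kleisli_triple +
  fixes tau
  assumes strength: "is_strength C P T eta ext tau"
begin

lemma strength_hom[simp]: "tau X Y \<in> hom (prd X (T Y)) (T (prd X Y))"
  using strength unfolding is_strength_def by blast

lemma strength_eta: "cmp (prd X Y) (prd X (T Y)) (T (prd X Y)) (tau X Y) (crs X Y X (T Y) (idm X) (eta Y)) = eta (prd X Y)"
  using strength unfolding is_strength_def by blast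

lemma strength_ext: "f \<in> hom Y (T Z) \<Longrightarrow>
   cmp (prd X (T Y)) (prd X (T Z)) (T (prd X Z)) (tau X Z) (crs X (T Y) X (T Z) (idm X) (ext Y Z f))
   = cmp (prd X (T Y)) (T (prd X Y)) (T (prd X Z))
       (ext (prd X Y) (prd X Z) (cmp (prd X Y) (prd X (T Z)) (T (prd X Z)) (tau X Z) (crs X Y X (T Z) (idm X) f)))
       (tau X Y)"
  using strength unfolding is_strength_def by blast

lemma strength_natural: "f \<in> hom X X' \<Longrightarrow> g \<in> hom Y Y' \<Longrightarrow>
   cmp (prd X (T Y)) (T (prd X Y)) (T (prd X' Y')) (Tm (prd X Y) (prd X' Y') (crs X Y X' Y' f g)) (tau X Y)
   = cmp (prd X (T Y)) (prd X' (T Y')) (T (prd X' Y')) (tau X' Y') (crs X (T Y) X' (T Y') f (Tm Y Y' g))"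
  using strength unfolding is_strength_def by blast

lemma strength_unit: "cmp (prd one (T Y)) (T (prd one Y)) (T Y) (Tm (prd one Y) Y (p2 one Y)) (tau one Y) = p2 one (T Y)"
  using strength unfolding is_strength_def by blast

lemma strength_assoc: "cmp (prd (prd X Y) (T Z)) (T (prd (prd X Y) Z)) (T (prd X (prd Y Z)))
          (Tm (prd (prd X Y) Z) (prd X (prd Y Z)) (assoc_r C P X Y Z))
          (tau (prd X Y) Z)
        = cmp (prd (prd X Y) (T Z)) (prd X (T (prd Y Z))) (T (prd X (prd Y Z)))
            (tau X (prd Y Z))
            (cmp (prd (prd X Y) (T Z)) (prd X (prd Y (T Z))) (prd X (T (prd Y Z)))
               (crs X (prd Y (T Z)) X (T (prd Y Z)) (idm X) (tau Y Z))
               (assoc_r C P X Y (T Z)))"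
  using strength unfolding is_strength_def by blast

lemma strength_eta_cross[simp]: "a \<in> hom W X \<Longrightarrow> b \<in> hom V Y \<Longrightarrow>
  cmp (prd W V) (prd X (T Y)) (T (prd X Y)) (tau X Y) (crs W V X (T Y) a (cmp V Y (T Y) (eta Y) b))
  = cmp (prd W V) (prd X Y) (T (prd X Y)) (eta (prd X Y)) (crs W V X Y a b)"
proof -
  assume a: "a \<in> hom W X" "b \<in> hom V Y"
  have "crs W V X (T Y) a (cmp V Y (T Y) (eta Y) b) =
     cmp (prd W V) (prd X Y) (prd X (T Y)) (crs X Y X (T Y) (idm X) (eta Y)) (crs W V X Y a b)"
    using a by simp
  then show ?thesis using a by (simp only:) (rule comp_assoc_subst[OF strength_eta], simp_all)
qed

lemma strength_ext_cross[simp]: "a \<in> hom W X \<Longrightarrow> f \<in> hom Y (T Z) \<Longrightarrow> h \<in> hom V (T Y) \<Longrightarrow>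
  cmp (prd W V) (prd X (T Z)) (T (prd X Z)) (tau X Z) (crs W V X (T Z) a (cmp V (T Y) (T Z) (ext Y Z f) h))
  = cmp (prd W V) (T (prd X Y)) (T (prd X Z))
       (ext (prd X Y) (prd X Z) (cmp (prd X Y) (prd X (T Z)) (T (prd X Z)) (tau X Z) (crs X Y X (T Z) (idm X) f)))
       (cmp (prd W V) (prd X (T Y)) (T (prd X Y)) (tau X Y) (crs W V X (T Y) a h))"
proof -
  assume a: "a \<in> hom W X" "f \<in> hom Y (T Z)" "h \<in> hom V (T Y)"
  have "crs W V X (T Z) a (cmp V (T Y) (T Z) (ext Y Z f) h) =
     cmp (prd W V) (prd X (T Y)) (prd X (T Z)) (crs X (T Y) X (T Z) (idm X) (ext Y Z f)) (crs W V X (T Y) a h)"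
    using a by simp
  then show ?thesis using a by (simp only:) (subst comp_assoc_subst[OF strength_ext], simp_all)
qed

lemma strength_natural_left: "f \<in> hom X X' \<Longrightarrow> h \<in> hom V (T Y) \<Longrightarrow>
  cmp (prd X V) (prd X' (T Y)) (T (prd X' Y)) (tau X' Y) (crs X V X' (T Y) f h)
  = cmp (prd X V) (T (prd X Y)) (T (prd X' Y)) (ext (prd X Y) (prd X' Y) (cmp (prd X Y) (prd X' Y) (T (prd X' Y)) (eta (prd X' Y)) (crs X Y X' Y f (idm Y))))
     (cmp (prd X V) (prd X (T Y)) (T (prd X Y)) (tau X Y) (crs X V X (T Y) (idm X) h))"
proof -
  assume a: "f \<in> hom X X'" "h \<in> hom V (T Y)"
  have e1: "crs X V X' (T Y) f h = cmp (prd X V) (prd X (T Y)) (prd X' (T Y)) (crs X (T Y) X' (T Y) f (Tm Y Y (idm Y))) (crs X V X (T Y) (idm X) h)"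
    using a by (simp add: Tmap_eq)
  have e2: "cmp (prd X (T Y)) (prd X' (T Y)) (T (prd X' Y)) (tau X' Y) (crs X (T Y) X' (T Y) f (Tm Y Y (idm Y))) =
     cmp (prd X (T Y)) (T (prd X Y)) (T (prd X' Y)) (Tm (prd X Y) (prd X' Y) (crs X Y X' Y f (idm Y))) (tau X Y)"
    using strength_natural[of f X X' "idm Y" Y Y] a by simp
  show ?thesis unfolding e1 using a by (subst comp_assoc_subst[OF e2]) (simp_all add: Tmap_eq)
qed

lemma strength_assoc_cross[simp]: "h \<in> hom V (T Z) \<Longrightarrow>
  cmp (prd X (prd Y V)) (prd X (T (prd Y Z))) (T (prd X (prd Y Z))) (tau X (prd Y Z))
    (crs X (prd Y V) X (T (prd Y Z)) (idm X) (cmp (prd Y V) (prd Y (T Z)) (T (prd Y Z)) (tau Y Z) (crs Y V Y (T Z) (idm Y) h)))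
  = cmp (prd X (prd Y V)) (T (prd (prd X Y) Z)) (T (prd X (prd Y Z)))
      (ext (prd (prd X Y) Z) (prd X (prd Y Z)) (cmp (prd (prd X Y) Z) (prd X (prd Y Z)) (T (prd X (prd Y Z))) (eta (prd X (prd Y Z))) (assoc_r C P X Y Z)))
      (cmp (prd X (prd Y V)) (prd (prd X Y) (T Z)) (T (prd (prd X Y) Z)) (tau (prd X Y) Z)
         (cmp (prd X (prd Y V)) (prd (prd X Y) V) (prd (prd X Y) (T Z)) (crs (prd X Y) V (prd X Y) (T Z) (idm (prd X Y)) h) (assoc_l C P X Y V)))"
proof -
  assume h: "h \<in> hom V (T Z)"
  have p: "crs X (prd Y V) X (prd Y (T Z)) (idm X) (crs Y V Y (T Z) (idm Y) h) =
     cmp (prd X (prd Y V)) (prd (prd X Y) (T Z)) (prd X (prd Y (T Z))) (assoc_r C P X Y (T Z))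
       (cmp (prd X (prd Y V)) (prd (prd X Y) V) (prd (prd X Y) (T Z)) (crs (prd X Y) V (prd X Y) (T Z) (idm (prd X Y)) h) (assoc_l C P X Y V))"
    using h by (simp add: cross_def assoc_r_def assoc_l_def Let_def)
  have q: "crs X (prd Y V) X (T (prd Y Z)) (idm X) (cmp (prd Y V) (prd Y (T Z)) (T (prd Y Z)) (tau Y Z) (crs Y V Y (T Z) (idm Y) h))
    = cmp (prd X (prd Y V)) (prd X (prd Y (T Z))) (prd X (T (prd Y Z))) (crs X (prd Y (T Z)) X (T (prd Y Z)) (idm X) (tau Y Z))
        (crs X (prd Y V) X (prd Y (T Z)) (idm X) (crs Y V Y (T Z) (idm Y) h))"
    using h by simp
  show ?thesis
    unfolding q p using h
    apply (subst comp_assoc_subst3[OF strength_assoc[symmetric]])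
    apply (simp_all add: Tmap_eq)
    done
qed

lemma strength_one: "cmp (T W) (prd one (T W)) (T (prd one W)) (tau one W) (pair (T W) one (T W) (trm (T W)) (idm (T W)))
  = ext W (prd one W) (cmp W (prd one W) (T (prd one W)) (eta (prd one W)) (pair W one W (trm W) (idm W)))"
proof -
  let ?q = "ext W (prd one W) (cmp W (prd one W) (T (prd one W)) (eta (prd one W)) (pair W one W (trm W) (idm W)))"
  have k: "cmp (T (prd one W)) (T W) (T (prd one W)) ?q (Tm (prd one W) W (p2 one W)) = idm (T (prd one W))"
    by (simp add: Tmap_eq)
  have "tau one W = cmp (prd one (T W)) (T (prd one W)) (T (prd one W)) (idm (T (prd one W))) (tau one W)"
    by simp
  also have "\<dots> = cmp (prd one (T W)) (T W) (T (prd one W)) ?q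
      (cmp (prd one (T W)) (T (prd one W)) (T W) (Tm (prd one W) W (p2 one W)) (tau one W))"
    unfolding k[symmetric] by (rule comp_assoc) (simp_all add: Tmap_eq)
  also have "\<dots> = cmp (prd one (T W)) (T W) (T (prd one W)) ?q (p2 one (T W))"
    by (simp only: strength_unit)
  finally have t: "tau one W = cmp (prd one (T W)) (T W) (T (prd one W)) ?q (p2 one (T W))" .
  show ?thesis by (subst t) simp
qed

end

locale fp_monoid = fp_category +
  fixes M e m
  assumes monoid: "is_monoid_object C P M e m"
begin

lemma unit_hom[simp]: "e \<in> hom one M" using monoid unfolding is_monoid_object_def by blast

lemma mult_hom[simp]: "m \<in> hom (prd M M) M" using monoid unfolding is_monoid_object_def by blast

lemma mult_assoc[simp]: "a \<in> hom W M \<Longrightarrow> b \<in> hom W M \<Longrightarrow> c \<in> hom W M \<Longrightarrow>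
  cmp W (prd M M) M m (pair W M M (cmp W (prd M M) M m (pair W M M a b)) c)
  = cmp W (prd M M) M m (pair W M M a (cmp W (prd M M) M m (pair W M M b c)))"
proof -
  assume a: "a \<in> hom W M" "b \<in> hom W M" "c \<in> hom W M"
  let ?q = "pair W (prd M M) M (pair W M M a b) c"
  have ax: "cmp (prd (prd M M) M) (prd M M) M m (crs (prd M M) M M M m (idm M))
     = cmp (prd (prd M M) M) (prd M M) M m
         (cmp (prd (prd M M) M) (prd M (prd M M)) (prd M M)
            (crs M (prd M M) M M (idm M) m) (assoc_r C P M M M))"
    using monoid unfolding is_monoid_object_def by blast
  have "cmp W (prd (prd M M) M) M (cmp (prd (prd M M) M) (prd M M) M m (crs (prd M M) M M M m (idm M))) ?q
     = cmp W (prd (prd M M) M) M (cmp (prd (prd M M) M) (prd M M) M m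
         (cmp (prd (prd M M) M) (prd M (prd M M)) (prd M M)
            (crs M (prd M M) M M (idm M) m) (assoc_r C P M M M))) ?q"
    by (simp only: ax)
  then show ?thesis using a by (simp add: cross_def assoc_r_def Let_def)
qed

lemma mult_unit_left[simp]: "a \<in> hom W M \<Longrightarrow>
  cmp W (prd M M) M m (pair W M M (cmp W one M e (trm W)) a) = a"
proof -
  assume a: "a \<in> hom W M"
  have ax: "cmp M (prd M M) M m (pair M M M (cmp M one M e (trm M)) (idm M)) = idm M"
    using monoid unfolding is_monoid_object_def by blast
  have "cmp W M M (cmp M (prd M M) M m (pair M M M (cmp M one M e (trm M)) (idm M))) a = a"
    using a by (simp only: ax) simp
  then show ?thesis using a by simp
qed

lemma mult_unit_right[simp]: "a \<in> hom W M \<Longrightarrow>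
  cmp W (prd M M) M m (pair W M M a (cmp W one M e (trm W))) = a"
proof -
  assume a: "a \<in> hom W M"
  have ax: "cmp M (prd M M) M m (pair M M M (idm M) (cmp M one M e (trm M))) = idm M"
    using monoid unfolding is_monoid_object_def by blast
  have "cmp W M M (cmp M (prd M M) M m (pair M M M (idm M) (cmp M one M e (trm M)))) a = a"
    using a by (simp only: ax) simp
  then show ?thesis using a by simp
qed

definition act where "act Y = cmp (prd M (prd M Y)) (prd (prd M M) Y) (prd M Y) (crs (prd M M) Y M Y m (idm Y)) (assoc_l C P M M Y)"

lemma act_hom[simp]: "act Y \<in> hom (prd M (prd M Y)) (prd M Y)" unfolding act_def by simp

lemma act_assoc: "cmp (prd (prd M M) (prd M Z)) (prd M (prd M Z)) (prd M Z) (act Z)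
            (cmp (prd (prd M M) (prd M Z)) (prd M (prd M (prd M Z)))
              (prd M (prd M Z))
              (crs M (prd M (prd M Z)) M (prd M Z) (idm M) (act Z))
              (assoc_r C P M M (prd M Z)))
  = cmp (prd (prd M M) (prd M Z)) (prd M (prd M Z)) (prd M Z) (act Z) (crs (prd M M) (prd M Z) M (prd M Z) m (idm (prd M Z)))"
  unfolding act_def by (simp add: cross_def assoc_r_def assoc_l_def Let_def mult_assoc[symmetric] pair_eta del: mult_assoc)

abbreviation "unit_tag X \<equiv> pair X M X (cmp X one M e (trm X)) (idm X)"

lemma unit_tag_hom[simp]: "unit_tag X \<in> hom X (prd M X)" by simp

lemma act_unit_right[simp]: "cmp (prd M X) (prd M (prd M X)) (prd M X) (act X) (crs M X M (prd M X) (idm M) (unit_tag X)) = idm (prd M X)"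
  unfolding act_def by (simp add: cross_def assoc_l_def Let_def)

lemma act_unit_left[simp]: "cmp (prd M Y) (prd M (prd M Y)) (prd M Y) (act Y) (cmp (prd M Y) (prd one (prd M Y)) (prd M (prd M Y))
   (crs one (prd M Y) M (prd M Y) e (idm (prd M Y))) (pair (prd M Y) one (prd M Y) (trm (prd M Y)) (idm (prd M Y)))) = idm (prd M Y)"
  unfolding act_def by (simp add: cross_def assoc_l_def Let_def)

end

locale writer_monad = fp_strong_monad + fp_monoid
begin

abbreviation "circ \<equiv> wrCirc C P T eta ext tau M m"

lemma circ_eq: "circ X Y f = cmp (prd M X) (T (prd M (prd M Y))) (T (prd M Y))
   (ext (prd M (prd M Y)) (prd M Y) (cmp (prd M (prd M Y)) (prd M Y) (T (prd M Y)) (eta (prd M Y)) (act Y)))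
   (cmp (prd M X) (prd M (T (prd M Y))) (T (prd M (prd M Y))) (tau M (prd M Y)) (crs M X M (T (prd M Y)) (idm M) f))"
  if "f \<in> hom X (T (prd M Y))"
  using that unfolding wrCirc_def Let_def act_def by (simp add: Tmap_eq)

lemma circ_hom[simp]: "f \<in> hom X (T (prd M Y)) \<Longrightarrow> circ X Y f \<in> hom (prd M X) (T (prd M Y))"
  by (simp add: circ_eq)

lemma circ_circ: "g \<in> hom Y (T (prd M Z)) \<Longrightarrow>
  circ (prd M Y) Z (circ Y Z g) = cmp (prd M (prd M Y)) (prd M Y) (T (prd M Z)) (circ Y Z g) (act Y)"
proof -
  assume g: "g \<in> hom Y (T (prd M Z))"
  have a: "cmp (prd M (prd M Y)) (prd M Y) (prd M (T (prd M Z))) (crs M Y M (T (prd M Z)) (idm M) g) (act Y)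
     = cmp (prd M (prd M Y)) (prd (prd M M) Y) (prd M (T (prd M Z))) (crs (prd M M) Y M (T (prd M Z)) m g) (assoc_l C P M M Y)"
    using g unfolding act_def by simp
  have b: "cmp (prd M (prd M Y)) (prd M (T (prd M Z))) (T (prd M (prd M Z))) (tau M (prd M Z))
     (cmp (prd M (prd M Y)) (prd (prd M M) Y) (prd M (T (prd M Z))) (crs (prd M M) Y M (T (prd M Z)) m g) (assoc_l C P M M Y))
   = cmp (prd M (prd M Y)) (T (prd (prd M M) (prd M Z))) (T (prd M (prd M Z)))
       (ext (prd (prd M M) (prd M Z)) (prd M (prd M Z)) (cmp (prd (prd M M) (prd M Z)) (prd M (prd M Z)) (T (prd M (prd M Z))) (eta (prd M (prd M Z))) (crs (prd M M) (prd M Z) M (prd M Z) m (idm (prd M Z)))))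
       (cmp (prd M (prd M Y)) (prd (prd M M) (T (prd M Z))) (T (prd (prd M M) (prd M Z))) (tau (prd M M) (prd M Z))
         (cmp (prd M (prd M Y)) (prd (prd M M) Y) (prd (prd M M) (T (prd M Z))) (crs (prd M M) Y (prd M M) (T (prd M Z)) (idm (prd M M)) g) (assoc_l C P M M Y)))"
    using g by (subst comp_assoc_subst[OF strength_natural_left]) simp_all
  show ?thesis using g by (simp add: circ_eq a b act_assoc)
qed

lemma circ_comp: "f \<in> hom X (T (prd M Y)) \<Longrightarrow> g \<in> hom Y (T (prd M Z)) \<Longrightarrow>
  circ X Z (cmp X (T (prd M Y)) (T (prd M Z)) (ext (prd M Y) (prd M Z) (circ Y Z g)) f)
  = cmp (prd M X) (T (prd M Y)) (T (prd M Z)) (ext (prd M Y) (prd M Z) (circ Y Z g)) (circ X Y f)"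
proof -
  assume f: "f \<in> hom X (T (prd M Y))" and g: "g \<in> hom Y (T (prd M Z))"
  have c2: "cmp (prd M (prd M Y)) (T (prd M (prd M Z))) (T (prd M Z))
   (ext (prd M (prd M Z)) (prd M Z) (cmp (prd M (prd M Z)) (prd M Z) (T (prd M Z)) (eta (prd M Z)) (act Z)))
   (cmp (prd M (prd M Y)) (prd M (T (prd M Z))) (T (prd M (prd M Z))) (tau M (prd M Z)) (crs M (prd M Y) M (T (prd M Z)) (idm M) (circ Y Z g)))
   = cmp (prd M (prd M Y)) (prd M Y) (T (prd M Z)) (circ Y Z g) (act Y)"
    using circ_circ[OF g] circ_eq[of "circ Y Z g" "prd M Y" Z] g by simp
  have fg: "cmp X (T (prd M Y)) (T (prd M Z)) (ext (prd M Y) (prd M Z) (circ Y Z g)) f \<in> hom X (T (prd M Z))"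
    using f g by simp
  show ?thesis using f g by (simp add: circ_eq[OF f] circ_eq[OF fg] c2)
qed

text \<open>Naturality and the unit law of the strength turn tau o (e x id) o <!, id> into
  T(e x id) o T<!, id>, after which the unit law of the monoid cancels the action.\<close>

lemma circ_unit_tag: "f \<in> hom X (T (prd M Y)) \<Longrightarrow> cmp X (prd M X) (T (prd M Y)) (circ X Y f) (unit_tag X) = f"
proof -
  assume f: "f \<in> hom X (T (prd M Y))"
  have a: "cmp X (prd M X) (prd M (T (prd M Y))) (crs M X M (T (prd M Y)) (idm M) f) (unit_tag X)
    = cmp X (T (prd M Y)) (prd M (T (prd M Y))) (cmp (T (prd M Y)) (prd one (T (prd M Y))) (prd M (T (prd M Y)))
         (crs one (T (prd M Y)) M (T (prd M Y)) e (idm (T (prd M Y)))) (pair (T (prd M Y)) one (T (prd M Y)) (trm (T (prd M Y))) (idm (T (prd M Y))))) f"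
    using f by (simp add: cross_def)
  have b: "cmp (T (prd M Y)) (prd M (T (prd M Y))) (T (prd M (prd M Y))) (tau M (prd M Y))
     (cmp (T (prd M Y)) (prd one (T (prd M Y))) (prd M (T (prd M Y)))
         (crs one (T (prd M Y)) M (T (prd M Y)) e (idm (T (prd M Y)))) (pair (T (prd M Y)) one (T (prd M Y)) (trm (T (prd M Y))) (idm (T (prd M Y)))))
    = ext (prd M Y) (prd M (prd M Y)) (cmp (prd M Y) (prd one (prd M Y)) (T (prd M (prd M Y)))
        (cmp (prd one (prd M Y)) (prd M (prd M Y)) (T (prd M (prd M Y))) (eta (prd M (prd M Y))) (crs one (prd M Y) M (prd M Y) e (idm (prd M Y))))
        (pair (prd M Y) one (prd M Y) (trm (prd M Y)) (idm (prd M Y))))"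
    by (subst comp_assoc_subst[OF strength_natural_left]) (simp_all add: strength_one)
  have "cmp X (prd M X) (T (prd M Y)) (circ X Y f) (unit_tag X) =
    cmp X (T (prd M (prd M Y))) (T (prd M Y))
     (ext (prd M (prd M Y)) (prd M Y) (cmp (prd M (prd M Y)) (prd M Y) (T (prd M Y)) (eta (prd M Y)) (act Y)))
     (cmp X (T (prd M Y)) (T (prd M (prd M Y))) (cmp (T (prd M Y)) (prd M (T (prd M Y))) (T (prd M (prd M Y))) (tau M (prd M Y))
     (cmp (T (prd M Y)) (prd one (T (prd M Y))) (prd M (T (prd M Y)))
         (crs one (T (prd M Y)) M (T (prd M Y)) e (idm (T (prd M Y)))) (pair (T (prd M Y)) one (T (prd M Y)) (trm (T (prd M Y))) (idm (T (prd M Y)))))) f)"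
    using f by (simp add: circ_eq a del: pair_comp)
  also have "\<dots> = f" unfolding b using f by simp
  finally show ?thesis .
qed

lemma circ_eta: "circ X X (cmp X (prd M X) (T (prd M X)) (eta (prd M X)) (unit_tag X)) = eta (prd M X)"
  by (simp add: circ_eq)

lemma wrEta_eq: "wrEta C P T eta M e X = cmp X (prd M X) (T (prd M X)) (eta (prd M X)) (unit_tag X)"
  unfolding wrEta_def ..

lemma writer_kleisli_triple:
  "is_kleisli_triple C (wrT P T M) (wrEta C P T eta M e) (wrExt C P T eta ext tau M m)"
  unfolding is_kleisli_triple_def wrT_def wrExt_def wrEta_eq
  by (simp add: circ_eta circ_unit_tag circ_comp)

end

locale writer_kleene = writer_monad + fp_kleene_monad +
  assumes strength_kleene: "strength_respects_kleene C P T tau J B St"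
begin

lemma strength_join: "f \<in> hom Y (T Y') \<Longrightarrow> g \<in> hom Y (T Y') \<Longrightarrow>
  cmp (prd X Y) (prd X (T Y')) (T (prd X Y')) (tau X Y') (crs X Y X (T Y') (idm X) (J Y Y' f g))
  = J (prd X Y) (prd X Y')
      (cmp (prd X Y) (prd X (T Y')) (T (prd X Y')) (tau X Y') (crs X Y X (T Y') (idm X) f))
      (cmp (prd X Y) (prd X (T Y')) (T (prd X Y')) (tau X Y') (crs X Y X (T Y') (idm X) g))"
  using strength_kleene unfolding strength_respects_kleene_def by blast

lemma strength_bot:
  "cmp (prd X Y) (prd X (T Y')) (T (prd X Y')) (tau X Y') (crs X Y X (T Y') (idm X) (B Y Y'))
   = B (prd X Y) (prd X Y')"
  using strength_kleene unfolding strength_respects_kleene_def by blast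

lemma strength_star: "k \<in> hom Y (T Y) \<Longrightarrow>
  cmp (prd X Y) (prd X (T Y)) (T (prd X Y)) (tau X Y) (crs X Y X (T Y) (idm X) (St Y k))
  = St (prd X Y) (cmp (prd X Y) (prd X (T Y)) (T (prd X Y)) (tau X Y) (crs X Y X (T Y) (idm X) k))"
  using strength_kleene unfolding strength_respects_kleene_def by blast

lemma circ_join: "f \<in> hom X (T (prd M Y)) \<Longrightarrow> g \<in> hom X (T (prd M Y)) \<Longrightarrow>
  circ X Y (J X (prd M Y) f g) = J (prd M X) (prd M Y) (circ X Y f) (circ X Y g)"
  by (simp add: circ_eq strength_join ext_join)

lemma circ_bot: "circ X Y (B X (prd M Y)) = B (prd M X) (prd M Y)"
  by (simp add: circ_eq strength_bot ext_bot)

lemma wrStar_eq: "f \<in> hom X (T (prd M X)) \<Longrightarrow>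
  wrStar C P T eta ext tau St M e m X f = cmp X (prd M X) (T (prd M X)) (St (prd M X) (circ X X f)) (unit_tag X)"
  unfolding wrStar_def wrEta_eq by simp

lemma circ_star:
  assumes f: "f \<in> hom X (T (prd M X))"
  shows "circ X X (cmp X (prd M X) (T (prd M X)) (St (prd M X) (circ X X f)) (unit_tag X)) = St (prd M X) (circ X X f)"
proof -
  let ?k = "circ X X f"
  let ?A = "prd M (prd M X)" and ?B = "prd M X"
  let ?s = "cmp ?A (prd M (T ?B)) (T (prd M ?B)) (tau M ?B) (crs M ?B M (T ?B) (idm M) ?k)"
  let ?a = "cmp ?A ?B (T ?B) (eta ?B) (act X)"
  have k: "?k \<in> hom ?B (T ?B)" using f by simp
  \<comment> \<open>By \<open>circ_circ\<close>, eta o act intertwines ?s with ?k, hence also their stars.\<close>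
  have "cmp ?A (T ?A) (T ?B) (ext ?A ?B ?a) ?s = cmp ?A (T ?B) (T ?B) (ext ?B ?B ?k) ?a"
    using circ_circ[OF f] circ_eq[OF k] k by simp
  then have "cmp ?A (T ?A) (T ?B) (ext ?A ?B ?a) (St ?A ?s) = cmp ?A (T ?B) (T ?B) (ext ?B ?B (St ?B ?k)) ?a"
    using k by (intro star_commute) simp_all
  then have commute: "cmp ?A (T ?A) (T ?B) (ext ?A ?B ?a) (St ?A ?s) = cmp ?A ?B (T ?B) (St ?B ?k) (act X)"
    using k by simp
  have "circ X X (cmp X ?B (T ?B) (St ?B ?k) (unit_tag X)) =
     cmp ?B (T ?A) (T ?B) (ext ?A ?B ?a) (cmp ?B (prd M (T ?B)) (T ?A) (tau M ?B)
        (cmp ?B ?A (prd M (T ?B)) (crs M ?B M (T ?B) (idm M) (St ?B ?k)) (crs M X M ?B (idm M) (unit_tag X))))"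
    using k by (simp add: circ_eq)
  also have "\<dots> = cmp ?B (T ?A) (T ?B) (ext ?A ?B ?a) (cmp ?B ?A (T ?A) (St ?A ?s) (crs M X M ?B (idm M) (unit_tag X)))"
    using k by (subst comp_assoc_subst[OF strength_star]) simp_all
  also have "\<dots> = cmp ?B ?A (T ?B) (cmp ?A ?B (T ?B) (St ?B ?k) (act X)) (crs M X M ?B (idm M) (unit_tag X))"
    using k by (subst comp_assoc_subst[OF commute]) simp_all
  also have "\<dots> = St ?B ?k" using k by simp
  finally show ?thesis .
qed

lemma writer_kleene_monad:
  "kleene_monad C (wrT P T M) (wrEta C P T eta M e) (wrExt C P T eta ext tau M m)
     (wrJoin P J M) (wrBot P B M) (wrStar C P T eta ext tau St M e m)"
  unfolding kleene_monad_def
proof (intro conjI cat writer_kleisli_triple)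
  have "inj_on (circ X Y) (hom X (T (prd M Y)))" for X Y
    by (rule inj_on_inverseI[where g = "\<lambda>h. cmp X (prd M X) (T (prd M Y)) h (unit_tag X)"]) (rule circ_unit_tag)
  then show "is_kk_category (kleisli_kk C (wrT P T M) (wrEta C P T eta M e) (wrExt C P T eta ext tau M m)
      (wrJoin P J M) (wrBot P B M) (wrStar C P T eta ext tau St M e m))"
    by (rule_tac kleisli.is_kk_category_reflect[where F = "\<lambda>X. prd M X" and \<Phi> = circ])
      (simp_all add: kleisli_kk_def wrT_def wrEta_eq wrExt_def wrJoin_def wrBot_def wrStar_eq
        circ_eta circ_comp circ_join circ_bot circ_star)
qed

end

theorem proposition3:
  fixes C :: "('o, 'a) cat"
    and T :: "'o \<Rightarrow> 'o" and eta :: "'o \<Rightarrow> 'a" and ext :: "'o \<Rightarrow> 'o \<Rightarrow> 'a \<Rightarrow> 'a"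
    and J :: "'o \<Rightarrow> 'o \<Rightarrow> 'a \<Rightarrow> 'a \<Rightarrow> 'a" and B :: "'o \<Rightarrow> 'o \<Rightarrow> 'a" and St :: "'o \<Rightarrow> 'a \<Rightarrow> 'a"
  assumes KM: "kleene_monad C T eta ext J B St"
  shows
    "(\<forall>(P :: ('o, 'a) cart) (E :: ('o, 'a) expo) (S :: 'o).
        is_ccc C P E \<longrightarrow>
        kleene_monad C (stT P E T S) (stEta P E T eta S) (stExt C P E T ext S)
          (stJoin C P E T J S) (stBot P E T B S) (stStar C P E T St S))
   \<and>
     (\<forall>(P :: ('o, 'a) cart) (tau :: 'o \<Rightarrow> 'o \<Rightarrow> 'a) (M :: 'o) (e :: 'a) (m :: 'a).
        has_finite_products C P \<longrightarrow>
        is_strength C P T eta ext tau \<longrightarrow>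
        is_monoid_object C P M e m \<longrightarrow>
        strength_respects_kleene C P T tau J B St \<longrightarrow>
        kleene_monad C (wrT P T M) (wrEta C P T eta M e) (wrExt C P T eta ext tau M m)
          (wrJoin P J M) (wrBot P B M) (wrStar C P T eta ext tau St M e m))"
proof (intro conjI allI impI)
  fix P :: "('o, 'a) cart" and E :: "('o, 'a) expo" and S :: 'o
  assume "is_ccc C P E"
  with KM interpret state_kleene C P E T eta ext S J B St
    by unfold_locales (simp_all add: kleene_monad_def is_ccc_def)
  show "kleene_monad C (stT P E T S) (stEta P E T eta S) (stExt C P E T ext S)
      (stJoin C P E T J S) (stBot P E T B S) (stStar C P E T St S)"
    by (rule state_kleene_monad)
next
  fix P :: "('o, 'a) cart" and tau :: "'o \<Rightarrow> 'o \<Rightarrow> 'a" and M :: 'o and e m :: 'a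
  assume "has_finite_products C P" "is_strength C P T eta ext tau" "is_monoid_object C P M e m"
    "strength_respects_kleene C P T tau J B St"
  with KM interpret writer_kleene C P T eta ext tau M e m J B St
    by unfold_locales (simp_all add: kleene_monad_def)
  show "kleene_monad C (wrT P T M) (wrEta C P T eta M e) (wrExt C P T eta ext tau M m)
      (wrJoin P J M) (wrBot P B M) (wrStar C P T eta ext tau St M e m)"
    by (rule writer_kleene_monad)
qed

end
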